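(* Let $\mathbb{P}=\mathcal{P}\cup\{\infty\}$ and $\mathcal{U}=\prod_{p\in\mathcal{P}}\mathbb{Z}_p^*\times\mathbb{R}^*_+$. Define $\chi:\mathcal{A}\to2^{\mathbb{P}}\sqcup\mathcal{U}$ by $\chi(a)=a\operatorname{sign}(a_\infty)\prod_{p\in\mathcal{P}}p^{-v_p(a)}\in\mathcal{U}$ if $a$ is invertible, and $\chi(a)=\{p\in\mathbb{P}: a_p=0\}\in2^{\mathbb{P}}$ if $a$ is not invertible. Then $\chi$ is surjective, and for all $a,b\in\mathcal{A}$ we have $\chi(a)=\chi(b)$ if and only if $\overline{\mathbb{Q}^*a}=\overline{\mathbb{Q}^*b}$. Consequently $\chi$ factors through the quasi-orbit map and induces a bijection of $2^{\mathbb{P}}\sqcup\mathcal{U}$ onto the quasi-orbit space $\mathcal{Q}(\mathcal{A}/\mathbb{Q}^* )$.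
   Context: $\mathcal{P}$ is the set of primes. $\mathcal{A}=\mathcal{A}_f\times\mathbb{R}$ is the ring of adeles ($\mathcal{A}_f$ the restricted product of the $\mathbb{Q}_p$ relative to the $\mathbb{Z}_p$), with product topology, componentwise operations, and $\mathbb{Q}^*$ acting by multiplication through the diagonal embedding. Write $a=((a_p)_{p\in\mathcal{P}},a_\infty)$; $a$ is invertible iff all $a_p\ne0$, $a_\infty\ne0$ and $a_p\in\mathbb{Z}_p^*$ for almost all $p$. $v_p$ is the $p$-adic valuation, $v_p(a):=v_p(a_p)$ (so for invertible $a$, $\prod_p p^{-v_p(a)}$ is a finite product and a rational number). The quasi-orbit space $\mathcal{Q}(\mathcal{A}/\mathbb{Q}^* )$ is the quotient of $\mathcal{A}$ by $a\sim b\iff\overline{\mathbb{Q}^*a}=\overline{\mathbb{Q}^*b}$. *)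

theory Defs
  imports "HOL-Analysis.Analysis" "HOL-Computational_Algebra.Primes"
begin

definition rat_pval :: "nat \<Rightarrow> rat \<Rightarrow> int" where
  "rat_pval p q = (if q = 0 then 0 else
     int (multiplicity (int p) (fst (quotient_of q))) -
     int (multiplicity (int p) (snd (quotient_of q))))"

definition rat_pabs :: "nat \<Rightarrow> rat \<Rightarrow> real" where
  "rat_pabs p q = (if q = 0 then 0 else real p powi (- rat_pval p q))"

definition padic_cauchy :: "nat \<Rightarrow> (nat \<Rightarrow> rat) \<Rightarrow> bool" where
  "padic_cauchy p s \<longleftrightarrow>
     (\<forall>e>0. \<exists>N. \<forall>m\<ge>N. \<forall>n\<ge>N. rat_pabs p (s m - s n) < e)"

definition padic_equiv :: "nat \<Rightarrow> (nat \<Rightarrow> rat) \<Rightarrow> (nat \<Rightarrow> rat) \<Rightarrow> bool" where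
  "padic_equiv p s t \<longleftrightarrow> (\<lambda>n. rat_pabs p (s n - t n)) \<longlonglongrightarrow> 0"

type_synonym padic = "(nat \<Rightarrow> rat) set"

definition padic_class :: "nat \<Rightarrow> (nat \<Rightarrow> rat) \<Rightarrow> padic" where
  "padic_class p s = {t. padic_cauchy p t \<and> padic_equiv p s t}"

definition Qp :: "nat \<Rightarrow> padic set" where
  "Qp p = {padic_class p s | s. padic_cauchy p s}"

definition padic_zero :: "nat \<Rightarrow> padic" where
  "padic_zero p = padic_class p (\<lambda>n. 0)"

definition padic_smult :: "nat \<Rightarrow> rat \<Rightarrow> padic \<Rightarrow> padic" where
  "padic_smult p q x = {t. padic_cauchy p t \<and> (\<exists>s\<in>x. padic_equiv p (\<lambda>n. q * s n) t)}"

definition padic_abs :: "nat \<Rightarrow> padic \<Rightarrow> real" where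
  "padic_abs p x = lim (\<lambda>n. rat_pabs p ((SOME s. s \<in> x) n))"

definition padic_dist :: "nat \<Rightarrow> padic \<Rightarrow> padic \<Rightarrow> real" where
  "padic_dist p x y =
     lim (\<lambda>n. rat_pabs p ((SOME s. s \<in> x) n - (SOME t. t \<in> y) n))"

definition padic_val :: "nat \<Rightarrow> padic \<Rightarrow> int" where
  "padic_val p x = (THE k. padic_abs p x = real p powi (- k))"

definition Zp :: "nat \<Rightarrow> padic set" where
  "Zp p = {x \<in> Qp p. padic_abs p x \<le> 1}"

definition Zp_units :: "nat \<Rightarrow> padic set" where
  "Zp_units p = {x \<in> Qp p. padic_abs p x = 1}"

definition padic_topology :: "nat \<Rightarrow> padic topology" where
  "padic_topology p = topology_generated_by
     {{y \<in> Qp p. padic_dist p x y < r} | x r. x \<in> Qp p \<and> r > 0}"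

text \<open>An adele is a pair (finite part, real part); the finite part is indexed by
  natural numbers, the component at a prime p lying in Q_p; at non-primes
  the (irrelevant) component is fixed to be the empty set.\<close>
type_synonym adele = "(nat \<Rightarrow> padic) \<times> real"

definition adeles :: "adele set" where
  "adeles = {a. (\<forall>p. prime p \<longrightarrow> fst a p \<in> Qp p) \<and> (\<forall>p. \<not> prime p \<longrightarrow> fst a p = {}) \<and>
                finite {p. prime p \<and> fst a p \<notin> Zp p}}"

text \<open>Subbasis (in fact a basis) of the topology of A = A_f x R, A_f carrying the
  restricted product topology.\<close>
definition adele_basis :: "adele set set" where
  "adele_basis = {{a \<in> adeles. (\<forall>p. prime p \<longrightarrow> fst a p \<in> U p) \<and> snd a \<in> V} | U V.
      (\<forall>p. prime p \<longrightarrow> openin (padic_topology p) (U p)) \<and>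
      finite {p. prime p \<and> U p \<noteq> Zp p} \<and> open V}"

definition adele_topology :: "adele topology" where
  "adele_topology = topology_generated_by adele_basis"

definition rat_act :: "rat \<Rightarrow> adele \<Rightarrow> adele" where
  "rat_act q a = ((\<lambda>p. if prime p then padic_smult p q (fst a p) else {}), of_rat q * snd a)"

definition orbit :: "adele \<Rightarrow> adele set" where
  "orbit a = {rat_act q a | q. q \<noteq> 0}"

definition adele_invertible :: "adele \<Rightarrow> bool" where
  "adele_invertible a \<longleftrightarrow> (\<forall>p. prime p \<longrightarrow> fst a p \<noteq> padic_zero p) \<and> snd a \<noteq> 0 \<and>
     finite {p. prime p \<and> fst a p \<notin> Zp_units p}"

definition adele_val :: "nat \<Rightarrow> adele \<Rightarrow> int" where
  "adele_val p a = padic_val p (fst a p)"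

text \<open>P-bar = primes together with infinity; infinity is represented by None.\<close>
definition Pbar :: "nat option set" where
  "Pbar = {None} \<union> Some ` {p. prime p}"

definition units_U :: "adele set" where
  "units_U = {a \<in> adeles. (\<forall>p. prime p \<longrightarrow> fst a p \<in> Zp_units p) \<and> snd a > 0}"

definition chi_codomain :: "(nat option set + adele) set" where
  "chi_codomain = Inl ` Pow Pbar \<union> Inr ` units_U"

definition chi :: "adele \<Rightarrow> nat option set + adele" where
  "chi a = (if adele_invertible a then
      Inr (rat_act ((if snd a > 0 then 1 else -1) *
             (\<Prod>p\<in>{p. prime p \<and> adele_val p a \<noteq> 0}. (of_nat p :: rat) powi (- adele_val p a))) a)
    else Inl ({Some p | p. prime p \<and> fst a p = padic_zero p} \<union> (if snd a = 0 then {None} else {})))"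

definition quasi_orbit_rel :: "(adele \<times> adele) set" where
  "quasi_orbit_rel = {(a, b). a \<in> adeles \<and> b \<in> adeles \<and>
     adele_topology closure_of orbit a = adele_topology closure_of orbit b}"

end

theory Submission
  imports Defs
begin

text \<open>An invertible adele a is moved into U by exactly one rational, the sign of its real component
  times the product of the p^(-v_p(a)), so on invertible adeles chi separates orbits; and such an
  orbit is closed, because two multipliers q, q' with q a and q' a in a small box around any adele
  differ by an integer of absolute value less than 1. A non-invertible adele a has as orbit closure
  all adeles vanishing at least where a vanishes: strong approximation in Q gives a multiplier q with
  q a_p close to the target at the finitely many primes of a box and integral elsewhere, and
  non-invertibility (a zero component, or infinitely many non-unit components) supplies large
  denominators L for which q + M t / L can also be tuned at the real place.\<close>

section \<open>The p-adic absolute value on Q\<close>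

lemma rat_pval_of_int_divide:
  assumes p: "prime p" and a: "a \<noteq> 0" and b: "b \<noteq> 0"
  shows "rat_pval p (of_int a / of_int b) =
         int (multiplicity (int p) a) - int (multiplicity (int p) b)"
proof -
  define q where "q = (of_int a / of_int b :: rat)"
  obtain n d where nd: "quotient_of q = (n, d)" by (cases "quotient_of q") auto
  have d: "d > 0" using quotient_of_denom_pos[OF nd] .
  have n: "n \<noteq> 0" and q0: "q \<noteq> 0" using quotient_of_div[OF nd] a b d by (auto simp: q_def)
  have "of_int a / of_int b = (of_int n / of_int d :: rat)"
    using quotient_of_div[OF nd] q_def by simp
  hence "of_int (a * d) = (of_int (n * b) :: rat)" using b d by (simp add: field_simps)
  hence "a * d = n * b" by (simp only: of_int_eq_iff)
  hence "multiplicity (int p) a + multiplicity (int p) d =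
         multiplicity (int p) n + multiplicity (int p) b"
    using prime_elem_multiplicity_mult_distrib[of "int p"] p a b n d
      by (metis less_irrefl prime_imp_prime_elem prime_nat_int_transfer)
  thus ?thesis using q0 nd by (simp add: rat_pval_def q_def[symmetric])
qed

lemma rat_as_int_fraction:
  obtains a b where "a \<noteq> 0 \<or> (x::rat) = 0" "b > 0" "x = of_int a / of_int b"
proof -
  obtain n d where nd: "quotient_of x = (n, d)" by (cases "quotient_of x") auto
  show ?thesis using that[of n d] quotient_of_denom_pos[OF nd] quotient_of_div[OF nd] by auto
qed

lemma rat_pabs_0 [simp]: "rat_pabs p 0 = 0"
  by (simp add: rat_pabs_def)

context
  fixes p :: nat
  assumes p: "prime p"
begin

lemma rat_pval_mult:
  assumes x: "x \<noteq> 0" and y: "y \<noteq> 0"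
  shows "rat_pval p (x * y) = rat_pval p x + rat_pval p y"
proof -
  obtain a b where ab: "a \<noteq> 0" "b > 0" "x = of_int a / of_int b"
    using rat_as_int_fraction[of x] x by metis
  obtain c d where cd: "c \<noteq> 0" "d > 0" "y = of_int c / of_int d"
    using rat_as_int_fraction[of y] y by metis
  have e: "x * y = of_int (a * c) / of_int (b * d)" using ab cd by simp
  have pe: "prime_elem (int p)" using p by simp
  have "rat_pval p (x * y) = int (multiplicity (int p) (a * c)) - int (multiplicity (int p) (b * d))"
    unfolding e by (rule rat_pval_of_int_divide[OF p]) (use ab cd in auto)
  thus ?thesis
    using ab cd rat_pval_of_int_divide[OF p] prime_elem_multiplicity_mult_distrib[OF pe] by simp
qed

lemma rat_pval_add_ge:
  assumes x: "x \<noteq> 0" and y: "y \<noteq> 0" and xy: "x + y \<noteq> 0"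
  shows "rat_pval p (x + y) \<ge> min (rat_pval p x) (rat_pval p y)"
proof -
  obtain a b where ab: "a \<noteq> 0" "b > 0" "x = of_int a / of_int b"
    using rat_as_int_fraction[of x] x by metis
  obtain c d where cd: "c \<noteq> 0" "d > 0" "y = of_int c / of_int d"
    using rat_as_int_fraction[of y] y by metis
  have x': "x = of_int (a * d) / of_int (b * d)" and y': "y = of_int (c * b) / of_int (b * d)"
    using ab cd by simp_all
  have s: "x + y = of_int (a * d + c * b) / of_int (b * d)"
    using x' y' by (simp add: add_divide_distrib)
  have s0: "a * d + c * b \<noteq> 0" using xy s by (metis div_0 of_int_0)
  define m where "m = min (multiplicity (int p) (a * d)) (multiplicity (int p) (c * b))"
  have "int p ^ m dvd a * d" "int p ^ m dvd c * b"
    unfolding m_def by (intro multiplicity_dvd'; simp)+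
  hence "int p ^ m dvd a * d + c * b" by simp
  hence "multiplicity (int p) (a * d + c * b) \<ge> m"
    using s0 p by (intro multiplicity_geI) (auto simp: prime_int_iff)
  moreover have "rat_pval p (x + y) =
      int (multiplicity (int p) (a * d + c * b)) - int (multiplicity (int p) (b * d))"
    unfolding s by (rule rat_pval_of_int_divide[OF p]) (use ab cd s0 in auto)
  moreover have "rat_pval p x = int (multiplicity (int p) (a * d)) - int (multiplicity (int p) (b * d))"
    unfolding x' by (rule rat_pval_of_int_divide[OF p]) (use ab cd in auto)
  moreover have "rat_pval p y = int (multiplicity (int p) (c * b)) - int (multiplicity (int p) (b * d))"
    unfolding y' by (rule rat_pval_of_int_divide[OF p]) (use ab cd in auto)
  ultimately show ?thesis unfolding m_def by (auto simp: min_def)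
qed

lemma rat_pabs_nonneg: "rat_pabs p x \<ge> 0"
  by (simp add: rat_pabs_def)

lemma rat_pabs_pos: "x \<noteq> 0 \<Longrightarrow> rat_pabs p x > 0"
  using p by (simp add: rat_pabs_def prime_gt_0_nat)

lemma rat_pabs_eq_0_iff [simp]: "rat_pabs p x = 0 \<longleftrightarrow> x = 0"
  by (metis rat_pabs_pos less_irrefl rat_pabs_def)

lemma rat_pabs_eq_power_int: "x \<noteq> 0 \<Longrightarrow> rat_pabs p x = real p powi (- rat_pval p x)"
  by (simp add: rat_pabs_def)

lemma rat_pabs_mult: "rat_pabs p (x * y) = rat_pabs p x * rat_pabs p y"
proof (cases "x = 0 \<or> y = 0")
  case False
  have "real p \<noteq> 0" using p prime_gt_0_nat by simp
  hence "real p powi (- rat_pval p x + - rat_pval p y) =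
         real p powi (- rat_pval p x) * real p powi (- rat_pval p y)"
    by (rule power_int_add[OF disjI1])
  thus ?thesis using False by (simp add: rat_pabs_def rat_pval_mult)
qed (auto simp: rat_pabs_def)

lemma rat_pabs_of_int:
  "n \<noteq> 0 \<Longrightarrow> rat_pabs p (of_int n) = real p powi (- int (multiplicity (int p) n))"
  using rat_pval_of_int_divide[OF p, of n 1] by (simp add: rat_pabs_def)

lemma rat_pabs_of_int_le_1: "rat_pabs p (of_int n) \<le> 1"
proof (cases "n = 0")
  case False
  have "real p powi (- int (multiplicity (int p) n)) \<le> real p powi 0"
    using prime_ge_1_nat[OF p] by (intro power_int_increasing) auto
  thus ?thesis using rat_pabs_of_int False by simp
qed (simp add: rat_pabs_def)

lemma rat_pabs_of_int_not_dvd: "\<not> int p dvd n \<Longrightarrow> rat_pabs p (of_int n) = 1"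
  using rat_pabs_of_int[of n] by (auto simp: not_dvd_imp_multiplicity_0)

lemma rat_pabs_of_int_dvd:
  assumes d: "int p ^ k dvd n"
  shows "rat_pabs p (of_int n) \<le> real p powi (- int k)"
proof (cases "n = 0")
  case False
  have "multiplicity (int p) n \<ge> k"
    using d False p by (intro multiplicity_geI) (auto simp: prime_int_iff)
  hence "real p powi (- int (multiplicity (int p) n)) \<le> real p powi (- int k)"
    using prime_gt_1_nat[OF p] by (intro power_int_increasing) auto
  thus ?thesis using rat_pabs_of_int[OF False] by simp
qed (simp add: rat_pabs_def)

lemma rat_pabs_1 [simp]: "rat_pabs p 1 = 1"
  using rat_pabs_of_int_not_dvd[of 1] prime_gt_1_nat[OF p] by auto

lemma rat_pabs_minus: "rat_pabs p (- x) = rat_pabs p x"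
proof -
  have "rat_pabs p (- 1) = 1"
    using rat_pabs_of_int_not_dvd[of "- 1"] prime_gt_1_nat[OF p] by simp
  thus ?thesis using rat_pabs_mult[of "- 1" x] by simp
qed

lemma rat_pabs_minus_commute: "rat_pabs p (x - y) = rat_pabs p (y - x)"
  using rat_pabs_minus[of "x - y"] by simp

lemma rat_pabs_ultrametric: "rat_pabs p (x + y) \<le> max (rat_pabs p x) (rat_pabs p y)"
proof (cases "x = 0 \<or> y = 0 \<or> x + y = 0")
  case True
  thus ?thesis using rat_pabs_nonneg by (auto simp: max_def)
next
  case False
  have "- rat_pval p (x + y) \<le> max (- rat_pval p x) (- rat_pval p y)"
    using rat_pval_add_ge False by fastforce
  hence "real p powi (- rat_pval p (x + y)) \<le> real p powi max (- rat_pval p x) (- rat_pval p y)"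
    using prime_gt_1_nat[OF p] by (intro power_int_increasing) auto
  also have "\<dots> = max (real p powi (- rat_pval p x)) (real p powi (- rat_pval p y))"
  proof (cases "rat_pval p x \<le> rat_pval p y")
    case True
    hence "real p powi (- rat_pval p y) \<le> real p powi (- rat_pval p x)"
      using prime_gt_1_nat[OF p] by (intro power_int_increasing) auto
    thus ?thesis using True by (simp add: max_def)
  next
    case False
    hence "real p powi (- rat_pval p x) \<le> real p powi (- rat_pval p y)"
      using prime_gt_1_nat[OF p] by (intro power_int_increasing) auto
    thus ?thesis using False by (simp add: max_def)
  qed
  finally show ?thesis using False by (simp add: rat_pabs_def)
qed

lemma rat_pabs_diff_ultrametric:
  "rat_pabs p (x - z) \<le> max (rat_pabs p (x - y)) (rat_pabs p (y - z))"
  using rat_pabs_ultrametric[of "x - y" "y - z"] by simp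

lemma rat_pabs_triangle: "rat_pabs p (x + y) \<le> rat_pabs p x + rat_pabs p y"
  using rat_pabs_ultrametric[of x y] rat_pabs_nonneg[of x] rat_pabs_nonneg[of y] by linarith

lemma rat_pabs_eq_if_diff_less:
  assumes "rat_pabs p (x - y) < rat_pabs p y"
  shows "rat_pabs p x = rat_pabs p y"
  using assms rat_pabs_ultrametric[of "x - y" y] rat_pabs_ultrametric[of "y - x" x]
    rat_pabs_minus_commute[of x y] by (auto simp: max_def split: if_splits)

lemma rat_pabs_abs_diff_le: "\<bar>rat_pabs p x - rat_pabs p y\<bar> \<le> rat_pabs p (x - y)"
  using rat_pabs_triangle[of "x - y" y] rat_pabs_triangle[of "y - x" x]
    rat_pabs_minus_commute[of x y] by simp

lemma rat_pabs_of_nat_self: "rat_pabs p (of_nat p) = 1 / real p"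
proof -
  have "multiplicity (int p) (int p) = 1"
    using p multiplicity_prime_power[of "int p" 1] by simp
  thus ?thesis using rat_pabs_of_int[of "int p"] p
    by (simp add: prime_gt_0_nat power_int_minus inverse_eq_divide)
qed

lemma rat_pabs_of_nat_prime:
  assumes "prime l" "l \<noteq> p"
  shows "rat_pabs p (of_nat l) = 1"
  using assms p primes_dvd_imp_eq[of p l] rat_pabs_of_int_not_dvd[of "int l"] by auto

lemma rat_pabs_inverse: "rat_pabs p (inverse x) = inverse (rat_pabs p x)"
  using rat_pabs_mult[of "inverse x" x] rat_pabs_pos[of x]
  by (cases "x = 0") (simp_all add: field_simps)

lemma rat_pabs_divide: "rat_pabs p (x / y) = rat_pabs p x / rat_pabs p y"
  by (simp add: divide_inverse rat_pabs_mult rat_pabs_inverse)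

lemma rat_pabs_power: "rat_pabs p (x ^ n) = rat_pabs p x ^ n"
  by (induction n) (auto simp: rat_pabs_mult)

lemma rat_pabs_power_int: "rat_pabs p (x powi k) = rat_pabs p x powi k"
  by (cases "k \<ge> 0") (auto simp: power_int_def rat_pabs_power rat_pabs_inverse)

lemma rat_pabs_prod: "rat_pabs p (\<Prod>l\<in>L. f l) = (\<Prod>l\<in>L. rat_pabs p (f l))"
  by (induction L rule: infinite_finite_induct) (auto simp: rat_pabs_mult)

lemma rat_pabs_of_nat_prime_power_int:
  assumes "prime l"
  shows "rat_pabs p ((of_nat l) powi k) = (if l = p then real p powi (- k) else 1)"
  using assms rat_pabs_of_nat_self rat_pabs_of_nat_prime
  by (auto simp: rat_pabs_power_int power_int_one_over power_int_minus inverse_eq_divide)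


lemma rat_pabs_of_nat_prime_power:
  assumes "prime l"
  shows "rat_pabs p (of_nat l ^ k) = (if l = p then (1 / real p) ^ k else 1)"
  using assms rat_pabs_of_nat_self rat_pabs_of_nat_prime by (simp add: rat_pabs_power)

lemma rat_pabs_add_mult_le_max:
  assumes "rat_pabs p y \<le> 1"
  shows "rat_pabs p (x + m * y) \<le> max (rat_pabs p x) (rat_pabs p m)"
proof -
  have "rat_pabs p (m * y) \<le> rat_pabs p m"
    unfolding rat_pabs_mult using assms rat_pabs_nonneg by (intro mult_right_le_one_le) auto
  thus ?thesis using rat_pabs_ultrametric[of x "m * y"] by simp
qed
end

lemma finite_rat_pabs_neq_1:
  assumes q: "q \<noteq> 0"
  shows "finite {p. prime p \<and> rat_pabs p q \<noteq> 1}"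
proof -
  obtain a b where ab: "a \<noteq> 0" "b > 0" "q = of_int a / of_int b"
    using rat_as_int_fraction[of q] q by metis
  have "{p. prime p \<and> rat_pabs p q \<noteq> 1} \<subseteq> int -` ({d. d dvd a} \<union> {d. d dvd b})"
  proof
    fix p assume p: "p \<in> {p. prime p \<and> rat_pabs p q \<noteq> 1}"
    have "rat_pabs p q = 1" if "\<not> int p dvd a" "\<not> int p dvd b"
      using that p ab(3) rat_pabs_divide[of p] rat_pabs_of_int_not_dvd[of p] by simp
    thus "p \<in> int -` ({d. d dvd a} \<union> {d. d dvd b})" using p by auto
  qed
  moreover have "finite (int -` ({d. d dvd a} \<union> {d. d dvd b}))"
    using ab by (intro finite_vimageI) (auto simp: inj_def)
  ultimately show ?thesis by (rule finite_subset)
qed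

lemma rat_pabs_le_1_imp_Ints:
  assumes le1: "\<And>p. prime p \<Longrightarrow> rat_pabs p x \<le> 1"
  shows "x \<in> \<int>"
proof -
  obtain n d where nd: "quotient_of x = (n, d)" by (cases "quotient_of x") auto
  have d: "d > 0" and x: "x = of_int n / of_int d" and cop: "coprime n d"
    using quotient_of_denom_pos[OF nd] quotient_of_div[OF nd] quotient_of_coprime[OF nd] by auto
  have "d = 1"
  proof (rule ccontr)
    assume "d \<noteq> 1"
    hence "nat d \<noteq> 1" using d by simp
    then obtain p where p: "prime p" "p dvd nat d" using prime_factor_nat by blast
    have "int p dvd int (nat d)" using p(2) by (simp only: of_nat_dvd_iff)
    hence pd: "int p dvd d" using d by simp
    have "\<not> int p dvd n"
    proof
      assume "int p dvd n"
      hence "is_unit (int p)" using coprime_common_divisor[OF cop _ pd] by simp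
      thus False using p(1) not_prime_unit[of "int p"] by simp
    qed
    hence "rat_pabs p (of_int n) = 1" by (rule rat_pabs_of_int_not_dvd[OF p(1)])
    moreover have "rat_pabs p (of_int d) \<le> real p powi (- 1)"
      using rat_pabs_of_int_dvd[OF p(1), of 1 d] pd by simp
    moreover have "real p powi (- 1) < 1"
      using prime_gt_1_nat[OF p(1)] by (simp add: power_int_minus inverse_less_1_iff)
    moreover have "rat_pabs p (of_int d) > 0" using rat_pabs_pos[OF p(1)] d by simp
    moreover have "rat_pabs p x = rat_pabs p (of_int n) / rat_pabs p (of_int d)"
      using x rat_pabs_divide[OF p(1)] by simp
    ultimately have "rat_pabs p x > 1" by (simp add: less_divide_eq)
    thus False using le1[OF p(1)] by simp
  qed
  thus ?thesis using x by simp
qed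

lemma rat_eq_1_if_pabs_eq_1:
  assumes t: "t > 0" and pabs: "\<And>p. prime p \<Longrightarrow> rat_pabs p t = 1"
  shows "t = 1"
proof -
  have "t \<in> \<int>" "inverse t \<in> \<int>"
    using pabs by (auto intro!: rat_pabs_le_1_imp_Ints simp: rat_pabs_inverse)
  then obtain k m where k: "t = of_int k" and m: "inverse t = of_int m" by (auto elim!: Ints_cases)
  have "of_int (k * m) = (1 :: rat)" using k m t by (simp flip: m)
  hence "k * m = 1" by (simp only: of_int_eq_1_iff)
  moreover have "k > 0" using k t by simp
  ultimately show ?thesis using k by (simp add: pos_zmult_eq_1_iff)
qed

lemma rat_pabs_prod_primes:
  assumes p: "prime p" and L: "finite L" "\<forall>l\<in>L. prime l"
  shows "rat_pabs p (of_nat (\<Prod>L)) = (if p \<in> L then 1 / real p else 1)"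
proof -
  have "rat_pabs p (of_nat (\<Prod>L)) = (\<Prod>l\<in>L. rat_pabs p (of_nat l))"
    by (simp add: of_nat_prod rat_pabs_prod[OF p])
  also have "\<dots> = (\<Prod>l\<in>L. if l = p then 1 / real p else 1)"
    by (rule prod.cong) (use L rat_pabs_of_nat_self[OF p] rat_pabs_of_nat_prime[OF p] in auto)
  also have "\<dots> = (if p \<in> L then 1 / real p else 1)" using L(1) by simp
  finally show ?thesis .
qed

section \<open>The completion Q_p\<close>

lemma power_int_inj:
  fixes x :: "'a :: linordered_field"
  assumes "1 < x" "x powi m = x powi n"
  shows "m = n"
proof (rule ccontr)
  assume "m \<noteq> n"
  hence "x powi m < x powi n \<or> x powi n < x powi m"
    using power_int_strict_increasing[of m n x] power_int_strict_increasing[of n m x] assms(1)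
    by (meson linorder_neqE)
  thus False using assms(2) by simp
qed

context
  fixes p :: nat
  assumes p: "prime p"
begin

lemma padic_cauchy_const: "padic_cauchy p (\<lambda>n. c)"
  unfolding padic_cauchy_def by auto

lemma padic_cauchy_diff:
  assumes s: "padic_cauchy p s" and t: "padic_cauchy p t"
  shows "padic_cauchy p (\<lambda>n. s n - t n)"
  unfolding padic_cauchy_def
proof (intro allI impI)
  fix e :: real assume e: "e > 0"
  obtain N1 where N1: "\<forall>m\<ge>N1. \<forall>n\<ge>N1. rat_pabs p (s m - s n) < e"
    using s e unfolding padic_cauchy_def by blast
  obtain N2 where N2: "\<forall>m\<ge>N2. \<forall>n\<ge>N2. rat_pabs p (t m - t n) < e"
    using t e unfolding padic_cauchy_def by blast
  have "rat_pabs p (s m - t m - (s n - t n)) < e" if "max N1 N2 \<le> m" "max N1 N2 \<le> n" for m n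
  proof -
    have eq: "s m - t m - (s n - t n) = (s m - s n) + (t n - t m)" by simp
    have "rat_pabs p (s m - s n) < e" "rat_pabs p (t n - t m) < e"
      using N1 N2 that rat_pabs_minus_commute[OF p, of "t n" "t m"] by auto
    thus ?thesis
      unfolding eq using rat_pabs_ultrametric[OF p, of "s m - s n" "t n - t m"] by simp
  qed
  thus "\<exists>N. \<forall>m\<ge>N. \<forall>n\<ge>N. rat_pabs p (s m - t m - (s n - t n)) < e" by blast
qed

lemma padic_cauchy_smult:
  assumes s: "padic_cauchy p s"
  shows "padic_cauchy p (\<lambda>n. q * s n)"
  unfolding padic_cauchy_def
proof (intro allI impI)
  fix e :: real assume e: "e > 0"
  have qp: "rat_pabs p q + 1 > 0" using rat_pabs_nonneg[OF p, of q] by linarith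
  obtain N where N: "\<forall>m\<ge>N. \<forall>n\<ge>N. rat_pabs p (s m - s n) < e / (rat_pabs p q + 1)"
    using s e qp unfolding padic_cauchy_def by (meson divide_pos_pos)
  have "rat_pabs p (q * s m - q * s n) < e" if "N \<le> m" "N \<le> n" for m n
  proof -
    have "rat_pabs p (s m - s n) * (rat_pabs p q + 1) < e"
      using N that qp by (simp add: pos_less_divide_eq)
    moreover have "rat_pabs p (q * s m - q * s n) = rat_pabs p q * rat_pabs p (s m - s n)"
      using rat_pabs_mult[OF p, of q "s m - s n"] by (simp add: algebra_simps)
    moreover have "rat_pabs p q * rat_pabs p (s m - s n) \<le> rat_pabs p (s m - s n) * (rat_pabs p q + 1)"
      using rat_pabs_nonneg[OF p] by (simp add: algebra_simps)
    ultimately show ?thesis by linarith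
  qed
  thus "\<exists>N. \<forall>m\<ge>N. \<forall>n\<ge>N. rat_pabs p (q * s m - q * s n) < e" by blast
qed

lemma convergent_rat_pabs_if_padic_cauchy:
  assumes s: "padic_cauchy p s"
  shows "convergent (\<lambda>n. rat_pabs p (s n))"
proof -
  have "Cauchy (\<lambda>n. rat_pabs p (s n))"
  proof (rule CauchyI)
    fix e :: real assume "e > 0"
    then obtain N where N: "\<forall>m\<ge>N. \<forall>n\<ge>N. rat_pabs p (s m - s n) < e"
      using s unfolding padic_cauchy_def by blast
    show "\<exists>M. \<forall>m\<ge>M. \<forall>n\<ge>M. norm (rat_pabs p (s m) - rat_pabs p (s n)) < e"
    proof (intro exI[of _ N] allI impI)
      fix m n assume "N \<le> m" "N \<le> n"
      thus "norm (rat_pabs p (s m) - rat_pabs p (s n)) < e"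
        using N rat_pabs_abs_diff_le[OF p, of "s m" "s n"] by fastforce
    qed
  qed
  thus ?thesis by (simp add: Cauchy_convergent_iff)
qed

lemma padic_equiv_refl: "padic_equiv p s s"
  unfolding padic_equiv_def by simp

lemma padic_equiv_sym: "padic_equiv p s t \<Longrightarrow> padic_equiv p t s"
  unfolding padic_equiv_def by (subst rat_pabs_minus_commute[OF p]) simp

lemma padic_equiv_trans:
  assumes "padic_equiv p s t" "padic_equiv p t u"
  shows "padic_equiv p s u"
  unfolding padic_equiv_def
proof (rule Lim_null_comparison)
  show "\<forall>\<^sub>F n in sequentially.
      norm (rat_pabs p (s n - u n)) \<le> rat_pabs p (s n - t n) + rat_pabs p (t n - u n)"
    using rat_pabs_triangle[OF p, of "s n - t n" "t n - u n" for n]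
    by (simp add: rat_pabs_nonneg[OF p])
  show "(\<lambda>n. rat_pabs p (s n - t n) + rat_pabs p (t n - u n)) \<longlonglongrightarrow> 0"
    using tendsto_add[OF assms[unfolded padic_equiv_def]] by simp
qed

lemma tendsto_rat_pabs_diff_padic_equiv:
  assumes ss': "padic_equiv p s s'" and tt': "padic_equiv p t t'"
    and lim: "(\<lambda>n. rat_pabs p (s n - t n)) \<longlonglongrightarrow> L"
  shows "(\<lambda>n. rat_pabs p (s' n - t' n)) \<longlonglongrightarrow> L"
proof (rule Lim_transform[OF lim], rule Lim_null_comparison)
  have "\<bar>rat_pabs p (s' n - t' n) - rat_pabs p (s n - t n)\<bar> \<le>
      rat_pabs p (s n - s' n) + rat_pabs p (t n - t' n)" for n
  proof -
    have "\<bar>rat_pabs p (s' n - t' n) - rat_pabs p (s n - t n)\<bar> \<le> rat_pabs p ((s' n - s n) + (t n - t' n))"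
      using rat_pabs_abs_diff_le[OF p, of "s' n - t' n" "s n - t n"] by (simp add: algebra_simps)
    also have "\<dots> \<le> rat_pabs p (s n - s' n) + rat_pabs p (t n - t' n)"
      using rat_pabs_triangle[OF p, of "s' n - s n" "t n - t' n"]
        rat_pabs_minus_commute[OF p, of "s' n"] by simp
    finally show ?thesis .
  qed
  thus "\<forall>\<^sub>F n in sequentially. norm (rat_pabs p (s' n - t' n) - rat_pabs p (s n - t n)) \<le>
      rat_pabs p (s n - s' n) + rat_pabs p (t n - t' n)" by simp
  show "(\<lambda>n. rat_pabs p (s n - s' n) + rat_pabs p (t n - t' n)) \<longlonglongrightarrow> 0"
    using tendsto_add[OF ss'[unfolded padic_equiv_def] tt'[unfolded padic_equiv_def]] by simp
qed

lemma padic_class_mem: "padic_cauchy p s \<Longrightarrow> s \<in> padic_class p s"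
  unfolding padic_class_def by (simp add: padic_equiv_refl)

lemma padic_class_eq_iff:
  assumes "padic_cauchy p s" "padic_cauchy p t"
  shows "padic_class p s = padic_class p t \<longleftrightarrow> padic_equiv p s t"
proof
  assume "padic_class p s = padic_class p t"
  hence "t \<in> padic_class p s" using padic_class_mem[OF assms(2)] by simp
  thus "padic_equiv p s t" unfolding padic_class_def by simp
next
  assume "padic_equiv p s t"
  thus "padic_class p s = padic_class p t"
    unfolding padic_class_def using padic_equiv_sym padic_equiv_trans by blast
qed

lemma padic_class_in_Qp: "padic_cauchy p s \<Longrightarrow> padic_class p s \<in> Qp p"
  unfolding Qp_def by blast

lemma QpE:
  assumes "x \<in> Qp p"
  obtains s where "padic_cauchy p s" "x = padic_class p s"
  using assms unfolding Qp_def by blast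

lemma padic_equiv_some_in_class:
  assumes s: "padic_cauchy p s"
  shows "padic_equiv p (SOME t. t \<in> padic_class p s) s"
proof -
  have "(SOME t. t \<in> padic_class p s) \<in> padic_class p s"
    using padic_class_mem[OF s] by (auto simp: some_in_eq)
  thus ?thesis unfolding padic_class_def by (simp add: padic_equiv_sym)
qed

lemma tendsto_padic_dist:
  assumes "padic_cauchy p s" "padic_cauchy p t"
  shows "(\<lambda>n. rat_pabs p (s n - t n)) \<longlonglongrightarrow> padic_dist p (padic_class p s) (padic_class p t)"
proof -
  define s' where "s' = (SOME u. u \<in> padic_class p s)"
  define t' where "t' = (SOME u. u \<in> padic_class p t)"
  have "s' \<in> padic_class p s" "t' \<in> padic_class p t"
    unfolding s'_def t'_def using padic_class_mem[OF assms(1)] padic_class_mem[OF assms(2)]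
    by (auto simp: some_in_eq)
  hence "padic_cauchy p (\<lambda>n. s' n - t' n)"
    unfolding padic_class_def by (simp add: padic_cauchy_diff)
  hence "(\<lambda>n. rat_pabs p (s' n - t' n)) \<longlonglongrightarrow> padic_dist p (padic_class p s) (padic_class p t)"
    using convergent_rat_pabs_if_padic_cauchy
    unfolding padic_dist_def s'_def t'_def by (simp add: convergent_LIMSEQ_iff)
  thus ?thesis
    by (rule tendsto_rat_pabs_diff_padic_equiv[rotated 2])
      (use padic_equiv_some_in_class assms in \<open>simp_all add: s'_def t'_def\<close>)
qed

lemma tendsto_padic_abs:
  assumes "padic_cauchy p s"
  shows "(\<lambda>n. rat_pabs p (s n)) \<longlonglongrightarrow> padic_abs p (padic_class p s)"
proof -
  define s' where "s' = (SOME u. u \<in> padic_class p s)"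
  have "s' \<in> padic_class p s"
    unfolding s'_def using padic_class_mem[OF assms] by (auto simp: some_in_eq)
  hence "(\<lambda>n. rat_pabs p (s' n - 0)) \<longlonglongrightarrow> padic_abs p (padic_class p s)"
    using convergent_rat_pabs_if_padic_cauchy
    unfolding padic_abs_def s'_def padic_class_def by (simp add: convergent_LIMSEQ_iff)
  hence "(\<lambda>n. rat_pabs p (s n - 0)) \<longlonglongrightarrow> padic_abs p (padic_class p s)"
    by (rule tendsto_rat_pabs_diff_padic_equiv[rotated 2])
      (use padic_equiv_some_in_class assms in \<open>simp_all add: s'_def padic_equiv_refl\<close>)
  thus ?thesis by simp
qed

lemma padic_smult_class:
  assumes s: "padic_cauchy p s"
  shows "padic_smult p q (padic_class p s) = padic_class p (\<lambda>n. q * s n)"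
proof -
  have equiv: "padic_equiv p (\<lambda>n. q * s n) (\<lambda>n. q * s' n)" if "s' \<in> padic_class p s" for s'
  proof -
    have "(\<lambda>n. rat_pabs p q * rat_pabs p (s n - s' n)) \<longlonglongrightarrow> rat_pabs p q * 0"
      using that unfolding padic_class_def padic_equiv_def by (intro tendsto_mult) auto
    thus ?thesis
      unfolding padic_equiv_def by (simp add: rat_pabs_mult[OF p] flip: right_diff_distrib)
  qed
  show ?thesis
    unfolding padic_smult_def padic_class_def[of p "\<lambda>n. q * s n"]
    using equiv padic_class_mem[OF s] padic_equiv_trans padic_equiv_sym by blast
qed

lemma padic_zero_in_Qp: "padic_zero p \<in> Qp p"
  unfolding padic_zero_def by (rule padic_class_in_Qp[OF padic_cauchy_const])

lemma padic_const_in_Qp: "padic_class p (\<lambda>n. c) \<in> Qp p"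
  by (rule padic_class_in_Qp[OF padic_cauchy_const])

lemma padic_abs_const: "padic_abs p (padic_class p (\<lambda>n. c)) = rat_pabs p c"
  using LIMSEQ_unique[OF tendsto_padic_abs[OF padic_cauchy_const] tendsto_const] by simp

lemma padic_dist_const:
  "padic_dist p (padic_class p (\<lambda>n. a)) (padic_class p (\<lambda>n. b)) = rat_pabs p (a - b)"
  using LIMSEQ_unique[OF tendsto_padic_dist[OF padic_cauchy_const padic_cauchy_const] tendsto_const]
  by simp

lemma padic_smult_const: "padic_smult p q (padic_class p (\<lambda>n. c)) = padic_class p (\<lambda>n. q * c)"
  using padic_smult_class[OF padic_cauchy_const] by simp

lemma padic_dist_nonneg:
  assumes "x \<in> Qp p" "y \<in> Qp p"
  shows "padic_dist p x y \<ge> 0"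
proof -
  obtain s t where "padic_cauchy p s" "x = padic_class p s" "padic_cauchy p t" "y = padic_class p t"
    using assms by (metis QpE)
  thus ?thesis using LIMSEQ_le[OF tendsto_const tendsto_padic_dist] rat_pabs_nonneg[OF p] by auto
qed

lemma padic_abs_nonneg: "x \<in> Qp p \<Longrightarrow> padic_abs p x \<ge> 0"
  using LIMSEQ_le[OF tendsto_const tendsto_padic_abs] rat_pabs_nonneg[OF p] by (auto elim: QpE)

lemma padic_dist_commute:
  assumes "x \<in> Qp p" "y \<in> Qp p"
  shows "padic_dist p x y = padic_dist p y x"
proof -
  obtain s t where st: "padic_cauchy p s" "x = padic_class p s" "padic_cauchy p t" "y = padic_class p t"
    using assms by (metis QpE)
  show ?thesis
    using LIMSEQ_unique[OF tendsto_padic_dist[OF st(1,3)]] tendsto_padic_dist[OF st(3,1)] st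
    by (simp add: rat_pabs_minus_commute[OF p])
qed

lemma padic_dist_eq_0_iff:
  assumes "x \<in> Qp p" "y \<in> Qp p"
  shows "padic_dist p x y = 0 \<longleftrightarrow> x = y"
proof -
  obtain s t where st: "padic_cauchy p s" "x = padic_class p s" "padic_cauchy p t" "y = padic_class p t"
    using assms by (metis QpE)
  have "padic_dist p x y = 0 \<longleftrightarrow> padic_equiv p s t"
    using LIMSEQ_unique[OF tendsto_padic_dist[OF st(1,3)]] tendsto_padic_dist[OF st(1,3)] st
    unfolding padic_equiv_def by metis
  thus ?thesis using padic_class_eq_iff[OF st(1,3)] st by simp
qed

lemma padic_dist_self: "x \<in> Qp p \<Longrightarrow> padic_dist p x x = 0"
  using padic_dist_eq_0_iff by simp

lemma padic_dist_ultrametric: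
  assumes "x \<in> Qp p" "y \<in> Qp p" "z \<in> Qp p"
  shows "padic_dist p x z \<le> max (padic_dist p x y) (padic_dist p y z)"
proof -
  obtain s t u where st: "padic_cauchy p s" "x = padic_class p s" "padic_cauchy p t" "y = padic_class p t"
      "padic_cauchy p u" "z = padic_class p u"
    using assms by (metis QpE)
  have "(\<lambda>n. max (rat_pabs p (s n - t n)) (rat_pabs p (t n - u n))) \<longlonglongrightarrow>
        max (padic_dist p x y) (padic_dist p y z)"
    unfolding st(2,4,6) by (intro tendsto_max tendsto_padic_dist st(1,3,5))
  thus ?thesis
    using LIMSEQ_le[OF tendsto_padic_dist[OF st(1,5)]] rat_pabs_diff_ultrametric[OF p] st by auto
qed

lemma padic_dist_triangle:
  assumes "x \<in> Qp p" "y \<in> Qp p" "z \<in> Qp p"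
  shows "padic_dist p x z \<le> padic_dist p x y + padic_dist p y z"
  using padic_dist_ultrametric[OF assms] padic_dist_nonneg[OF assms(1,2)] padic_dist_nonneg[OF assms(2,3)]
  by linarith

lemma padic_dist_zero_left:
  assumes "y \<in> Qp p"
  shows "padic_dist p (padic_zero p) y = padic_abs p y"
proof -
  obtain t where t: "padic_cauchy p t" "y = padic_class p t" using assms by (rule QpE)
  have "(\<lambda>n. rat_pabs p (0 - t n)) \<longlonglongrightarrow> padic_dist p (padic_zero p) y"
    using tendsto_padic_dist[OF padic_cauchy_const t(1), of 0] t unfolding padic_zero_def by simp
  thus ?thesis using LIMSEQ_unique[OF tendsto_padic_abs[OF t(1)]] t rat_pabs_minus[OF p] by simp
qed

lemma padic_dist_zero_right: "y \<in> Qp p \<Longrightarrow> padic_dist p y (padic_zero p) = padic_abs p y"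
  using padic_dist_commute padic_dist_zero_left padic_zero_in_Qp by metis

lemma padic_abs_ultrametric:
  assumes "x \<in> Qp p" "y \<in> Qp p"
  shows "padic_abs p y \<le> max (padic_abs p x) (padic_dist p x y)"
  using padic_dist_ultrametric[OF padic_zero_in_Qp assms] padic_dist_zero_left assms by simp

lemma padic_abs_zero [simp]: "padic_abs p (padic_zero p) = 0"
  unfolding padic_zero_def using padic_abs_const by simp

lemma padic_abs_eq_0_iff: "x \<in> Qp p \<Longrightarrow> padic_abs p x = 0 \<longleftrightarrow> x = padic_zero p"
  using padic_dist_zero_left padic_dist_eq_0_iff[OF padic_zero_in_Qp] by auto

lemma padic_abs_pos: "x \<in> Qp p \<Longrightarrow> x \<noteq> padic_zero p \<Longrightarrow> padic_abs p x > 0"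
  using padic_abs_nonneg padic_abs_eq_0_iff by force

lemma padic_const_eq_zero_iff: "padic_class p (\<lambda>n. c) = padic_zero p \<longleftrightarrow> c = 0"
  using padic_abs_eq_0_iff[OF padic_const_in_Qp] padic_abs_const rat_pabs_eq_0_iff[OF p] by metis

lemma padic_smult_in_Qp: "x \<in> Qp p \<Longrightarrow> padic_smult p q x \<in> Qp p"
  by (metis QpE padic_smult_class padic_class_in_Qp padic_cauchy_smult)

lemma padic_smult_1: "x \<in> Qp p \<Longrightarrow> padic_smult p 1 x = x"
  by (metis QpE padic_smult_class mult_1 ext)

lemma padic_smult_smult:
  "x \<in> Qp p \<Longrightarrow> padic_smult p q (padic_smult p r x) = padic_smult p (q * r) x"
  by (erule QpE) (simp add: padic_smult_class padic_cauchy_smult mult.assoc)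

lemma padic_smult_zero [simp]: "padic_smult p q (padic_zero p) = padic_zero p"
  unfolding padic_zero_def using padic_smult_const[of q 0] by simp

lemma padic_dist_smult_right:
  assumes "x \<in> Qp p" "y \<in> Qp p"
  shows "padic_dist p (padic_smult p q x) (padic_smult p q y) = rat_pabs p q * padic_dist p x y"
proof -
  obtain s t where st: "padic_cauchy p s" "x = padic_class p s" "padic_cauchy p t" "y = padic_class p t"
    using assms by (metis QpE)
  have "(\<lambda>n. rat_pabs p (q * s n - q * t n)) \<longlonglongrightarrow> padic_dist p (padic_smult p q x) (padic_smult p q y)"
    using tendsto_padic_dist[OF padic_cauchy_smult padic_cauchy_smult, OF st(1,3)] st
    by (simp add: padic_smult_class)
  moreover have "(\<lambda>n. rat_pabs p (q * s n - q * t n)) \<longlonglongrightarrow> rat_pabs p q * padic_dist p x y"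
    unfolding st(2,4) by (simp add: rat_pabs_mult[OF p] tendsto_mult_left tendsto_padic_dist st
        flip: right_diff_distrib)
  ultimately show ?thesis by (rule LIMSEQ_unique)
qed

lemma padic_dist_smult_left:
  assumes "x \<in> Qp p"
  shows "padic_dist p (padic_smult p q x) (padic_smult p q' x) = rat_pabs p (q - q') * padic_abs p x"
proof -
  obtain s where s: "padic_cauchy p s" "x = padic_class p s" using assms by (rule QpE)
  have "(\<lambda>n. rat_pabs p (q * s n - q' * s n)) \<longlonglongrightarrow> padic_dist p (padic_smult p q x) (padic_smult p q' x)"
    using tendsto_padic_dist[OF padic_cauchy_smult padic_cauchy_smult, OF s(1) s(1)] s
    by (simp add: padic_smult_class)
  moreover have "(\<lambda>n. rat_pabs p (q * s n - q' * s n)) \<longlonglongrightarrow> rat_pabs p (q - q') * padic_abs p x"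
    unfolding s(2) by (simp add: rat_pabs_mult[OF p] tendsto_mult_left tendsto_padic_abs s
        flip: left_diff_distrib)
  ultimately show ?thesis by (rule LIMSEQ_unique)
qed

lemma padic_abs_smult: "x \<in> Qp p \<Longrightarrow> padic_abs p (padic_smult p q x) = rat_pabs p q * padic_abs p x"
  using padic_dist_smult_right[OF padic_zero_in_Qp, of x q]
  by (simp add: padic_dist_zero_left padic_smult_in_Qp)

lemma padic_smult_eq_zero_iff:
  assumes "x \<in> Qp p" "q \<noteq> 0"
  shows "padic_smult p q x = padic_zero p \<longleftrightarrow> x = padic_zero p"
  using assms padic_abs_smult[of x q] padic_abs_eq_0_iff padic_smult_in_Qp rat_pabs_pos[OF p]
  by (metis mult_eq_0_iff less_irrefl)

lemma padic_abs_eventually_eq: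
  assumes s: "padic_cauchy p s" and nz: "padic_class p s \<noteq> padic_zero p"
  shows "\<exists>N. \<forall>n\<ge>N. rat_pabs p (s n) = padic_abs p (padic_class p s)"
proof -
  define L where "L = padic_abs p (padic_class p s)"
  have L0: "L > 0" unfolding L_def using padic_abs_pos padic_class_in_Qp[OF s] nz by blast
  have lim: "(\<lambda>n. rat_pabs p (s n)) \<longlonglongrightarrow> L" using tendsto_padic_abs[OF s] L_def by simp
  have "eventually (\<lambda>n. rat_pabs p (s n) > L / 2) sequentially"
    using order_tendstoD(1)[OF lim, of "L / 2"] L0 by simp
  then obtain N1 where N1: "\<forall>n\<ge>N1. rat_pabs p (s n) > L / 2"
    unfolding eventually_sequentially by blast
  have "L / 2 > 0" using L0 by simp
  then obtain N2 where N2: "\<forall>m\<ge>N2. \<forall>n\<ge>N2. rat_pabs p (s m - s n) < L / 2"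
    using s unfolding padic_cauchy_def by blast
  define N where "N = max N1 N2"
  have const: "rat_pabs p (s n) = rat_pabs p (s N)" if "n \<ge> N" for n
  proof (rule rat_pabs_eq_if_diff_less[OF p])
    have "rat_pabs p (s n - s N) < L / 2" "L / 2 < rat_pabs p (s N)"
      using N1 N2 that unfolding N_def by auto
    thus "rat_pabs p (s n - s N) < rat_pabs p (s N)" by linarith
  qed
  hence "eventually (\<lambda>n. rat_pabs p (s n) = rat_pabs p (s N)) sequentially"
    unfolding eventually_sequentially by blast
  hence "(\<lambda>n. rat_pabs p (s n)) \<longlonglongrightarrow> rat_pabs p (s N)" by (rule tendsto_eventually)
  hence "L = rat_pabs p (s N)" using LIMSEQ_unique[OF lim] by blast
  thus ?thesis using const L_def by metis
qed

lemma padic_abs_eq_power_int: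
  assumes x: "x \<in> Qp p" and nz: "x \<noteq> padic_zero p"
  obtains k where "padic_abs p x = real p powi k"
proof -
  obtain s where s: "padic_cauchy p s" "x = padic_class p s" using x by (rule QpE)
  obtain N where "\<forall>n\<ge>N. rat_pabs p (s n) = padic_abs p x"
    using padic_abs_eventually_eq[OF s(1)] nz unfolding s(2) by blast
  hence "rat_pabs p (s N) = padic_abs p x" by simp
  moreover have "s N \<noteq> 0" using calculation padic_abs_pos[OF x nz] by auto
  ultimately have "padic_abs p x = real p powi (- rat_pval p (s N))"
    using rat_pabs_eq_power_int[OF p] by simp
  thus ?thesis by (rule that)
qed

lemma padic_abs_eq_power_int_padic_val:
  assumes x: "x \<in> Qp p" and nz: "x \<noteq> padic_zero p"
  shows "padic_abs p x = real p powi (- padic_val p x)"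
proof -
  obtain k where k: "padic_abs p x = real p powi k" using padic_abs_eq_power_int[OF x nz] .
  have "(THE k'. padic_abs p x = real p powi (- k')) = - k"
  proof (rule the_equality)
    fix k' assume "padic_abs p x = real p powi (- k')"
    hence "- k' = k" using k power_int_inj[of "real p"] prime_gt_1_nat[OF p] by simp
    thus "k' = - k" by simp
  qed (use k in simp)
  thus ?thesis unfolding padic_val_def using k by simp
qed

lemma padic_abs_le_inverse_if_less_1:
  assumes x: "x \<in> Qp p" "x \<noteq> padic_zero p" and lt: "padic_abs p x < 1"
  shows "padic_abs p x \<le> 1 / real p"
proof -
  obtain k where k: "padic_abs p x = real p powi k" using padic_abs_eq_power_int[OF x] .
  have p1: "real p > 1" using prime_gt_1_nat[OF p] by simp
  have "k < 0"
  proof (rule ccontr)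
    assume "\<not> k < 0"
    hence "real p powi 0 \<le> real p powi k" using p1 by (intro power_int_increasing) auto
    thus False using k lt by simp
  qed
  hence "real p powi k \<le> real p powi (- 1)" using p1 by (intro power_int_increasing) auto
  thus ?thesis using k by (simp add: power_int_minus inverse_eq_divide)
qed

lemma padic_rat_dense:
  assumes x: "x \<in> Qp p" and e: "e > 0"
  obtains c where "padic_dist p x (padic_class p (\<lambda>n. c)) < e"
proof -
  obtain s where s: "padic_cauchy p s" "x = padic_class p s" using x by (rule QpE)
  obtain N where N: "\<forall>m\<ge>N. \<forall>n\<ge>N. rat_pabs p (s m - s n) < e / 2"
    using s(1) e unfolding padic_cauchy_def by (meson half_gt_zero)
  have "(\<lambda>n. rat_pabs p (s n - s N)) \<longlonglongrightarrow> padic_dist p x (padic_class p (\<lambda>n. s N))"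
    using tendsto_padic_dist[OF s(1) padic_cauchy_const] s by simp
  hence "padic_dist p x (padic_class p (\<lambda>n. s N)) \<le> e / 2"
    using N by (intro LIMSEQ_le[OF _ tendsto_const]) (auto intro: less_imp_le)
  thus ?thesis using that[of "s N"] e by linarith
qed

end

section \<open>Topology of Q_p and of the adeles\<close>

lemma finite_pos_lower_bound:
  fixes f :: "'a \<Rightarrow> real"
  assumes "finite A" "\<And>x. x \<in> A \<Longrightarrow> f x > 0"
  shows "\<exists>r>0. r \<le> 1 \<and> (\<forall>x\<in>A. r \<le> f x)"
proof (intro exI conjI)
  show "0 < Min (insert 1 (f ` A))" using assms by (subst Min_gr_iff) auto
qed (use assms(1) in auto)

lemma generate_topology_on_local_base:
  assumes "generate_topology_on S U" "c \<in> U"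
    and basis: "\<And>B c. B \<in> S \<Longrightarrow> c \<in> B \<Longrightarrow> \<exists>i. P c i \<and> N c i \<subseteq> B"
    and directed: "\<And>c i j. P c i \<Longrightarrow> P c j \<Longrightarrow> \<exists>k. P c k \<and> N c k \<subseteq> N c i \<inter> N c j"
  shows "\<exists>i. P c i \<and> N c i \<subseteq> U"
  using assms(1,2)
proof (induction arbitrary: c rule: generate_topology_on.induct)
  case (Int a b)
  then obtain i j where "P c i" "N c i \<subseteq> a" "P c j" "N c j \<subseteq> b" by blast
  thus ?case using directed[of c i j] by blast
next
  case (UN K)
  then obtain k where "k \<in> K" "c \<in> k" by blast
  thus ?case using UN.IH by blast
qed (use basis in auto)

definition padic_ball :: "nat \<Rightarrow> padic \<Rightarrow> real \<Rightarrow> padic set" where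
  "padic_ball p x r = {y \<in> Qp p. padic_dist p x y < r}"

lemma padic_topology_eq_generated_by_balls:
  "padic_topology p = topology_generated_by {padic_ball p x r | x r. x \<in> Qp p \<and> r > 0}"
  unfolding padic_topology_def padic_ball_def by simp

lemma padic_ball_mono: "r \<le> r' \<Longrightarrow> padic_ball p c r \<subseteq> padic_ball p c r'"
  unfolding padic_ball_def by auto

context
  fixes p :: nat
  assumes p: "prime p"
begin

lemma openin_padic_ball: "x \<in> Qp p \<Longrightarrow> r > 0 \<Longrightarrow> openin (padic_topology p) (padic_ball p x r)"
  unfolding padic_topology_eq_generated_by_balls by (rule topology_generated_by_Basis) blast

lemma padic_ball_centre: "c \<in> Qp p \<Longrightarrow> r > 0 \<Longrightarrow> c \<in> padic_ball p c r"
  unfolding padic_ball_def using padic_dist_self[OF p] by simp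

lemma padic_ball_subset_padic_ball:
  assumes c: "c \<in> padic_ball p x r" and x: "x \<in> Qp p"
  shows "padic_ball p c (r - padic_dist p x c) \<subseteq> padic_ball p x r"
  using c x padic_dist_triangle[OF p x] unfolding padic_ball_def by fastforce

lemma openin_padic_topology_contains_ball:
  assumes "openin (padic_topology p) U" "c \<in> U"
  shows "\<exists>r>0. padic_ball p c r \<subseteq> U"
proof -
  have "generate_topology_on {padic_ball p x r | x r. x \<in> Qp p \<and> r > 0} U"
    using assms(1) unfolding padic_topology_eq_generated_by_balls
      by (rule openin_topology_generated_by)
  thus ?thesis
  proof (rule generate_topology_on_local_base[where P = "\<lambda>c r. r > 0" and N = "padic_ball p"])
    fix B c assume "B \<in> {padic_ball p x r | x r. x \<in> Qp p \<and> r > 0}" "c \<in> B"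
    then obtain x r where "B = padic_ball p x r" "x \<in> Qp p" "c \<in> padic_ball p x r" by blast
    moreover have "padic_dist p x c < r" using calculation unfolding padic_ball_def by auto
    ultimately show "\<exists>r>0. padic_ball p c r \<subseteq> B"
      using padic_ball_subset_padic_ball by (intro exI[of _ "r - padic_dist p x c"]) auto
  next
    fix c and r r' :: real assume "r > 0" "r' > 0"
    thus "\<exists>k>0. padic_ball p c k \<subseteq> padic_ball p c r \<inter> padic_ball p c r'"
      using padic_ball_mono[of "min r r'" r p c] padic_ball_mono[of "min r r'" r' p c]
      by (intro exI[of _ "min r r'"]) auto
  qed (use assms(2) in simp)
qed

lemma openin_padic_topologyI:
  assumes "U \<subseteq> Qp p" "\<And>x. x \<in> U \<Longrightarrow> \<exists>r>0. padic_ball p x r \<subseteq> U"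
  shows "openin (padic_topology p) U"
proof -
  have U: "U = \<Union>{padic_ball p x r | x r. x \<in> U \<and> r > 0 \<and> padic_ball p x r \<subseteq> U}"
  proof
    show "U \<subseteq> \<Union>{padic_ball p x r | x r. x \<in> U \<and> r > 0 \<and> padic_ball p x r \<subseteq> U}"
    proof
      fix x assume x: "x \<in> U"
      then obtain r where "r > 0" "padic_ball p x r \<subseteq> U" using assms(2) by blast
      moreover have "x \<in> padic_ball p x r" using padic_ball_centre x assms(1) calculation by blast
      ultimately show "x \<in> \<Union>{padic_ball p x r | x r. x \<in> U \<and> r > 0 \<and> padic_ball p x r \<subseteq> U}"
        using x by blast
    qed
  qed blast
  show ?thesis
    by (subst U, rule openin_Union) (use assms(1) openin_padic_ball in blast)
qed

lemma padic_ball_subset_Zp: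
  assumes c: "c \<in> Zp p" and r: "r \<le> 1"
  shows "padic_ball p c r \<subseteq> Zp p"
proof
  fix y assume "y \<in> padic_ball p c r"
  hence "y \<in> Qp p" "padic_dist p c y < r" unfolding padic_ball_def by auto
  moreover have "c \<in> Qp p" "padic_abs p c \<le> 1" using c unfolding Zp_def by auto
  ultimately show "y \<in> Zp p"
    using padic_abs_ultrametric[OF p, of c y] r unfolding Zp_def by auto
qed

lemma openin_Zp: "openin (padic_topology p) (Zp p)"
proof (rule openin_padic_topologyI)
  show "Zp p \<subseteq> Qp p" unfolding Zp_def by blast
  show "\<exists>r>0. padic_ball p x r \<subseteq> Zp p" if "x \<in> Zp p" for x
    using padic_ball_subset_Zp[OF that, of 1] zero_less_one by blast
qed

end

lemma adeles_Qp: "a \<in> adeles \<Longrightarrow> prime p \<Longrightarrow> fst a p \<in> Qp p"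
  unfolding adeles_def by auto

definition nonintegral_primes :: "adele \<Rightarrow> nat set" where
  "nonintegral_primes c = {p. prime p \<and> fst c p \<notin> Zp p}"

lemma finite_nonintegral_primes: "c \<in> adeles \<Longrightarrow> finite (nonintegral_primes c)"
  unfolding adeles_def nonintegral_primes_def by simp

definition adele_box :: "adele \<Rightarrow> nat set \<Rightarrow> real \<Rightarrow> real \<Rightarrow> adele set" where
  "adele_box c F r e = {a \<in> adeles.
     (\<forall>p. prime p \<longrightarrow> fst a p \<in> (if p \<in> F then padic_ball p (fst c p) r else Zp p)) \<and>
     snd a \<in> ball (snd c) e}"

text \<open>Requiring the non-integral primes of c to lie in F puts c into its own box, and r \<le> 1
  makes the boxes around c a directed family.\<close>
definition admissible_box :: "adele \<Rightarrow> nat set \<Rightarrow> real \<Rightarrow> real \<Rightarrow> bool" where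
  "admissible_box c F r e \<longleftrightarrow> finite F \<and> nonintegral_primes c \<subseteq> F \<and> 0 < r \<and> r \<le> 1 \<and> 0 < e"

lemma mem_adele_box:
  "a \<in> adele_box c F r e \<longleftrightarrow> a \<in> adeles \<and>
     (\<forall>p. prime p \<longrightarrow> fst a p \<in> (if p \<in> F then padic_ball p (fst c p) r else Zp p)) \<and>
     dist (snd c) (snd a) < e"
  unfolding adele_box_def mem_ball by (rule mem_Collect_eq)

lemma adele_box_in_basis:
  assumes c: "c \<in> adeles" and "finite F" "r > 0" "e > 0"
  shows "adele_box c F r e \<in> adele_basis"
proof -
  define U where "U = (\<lambda>p. if p \<in> F then padic_ball p (fst c p) r else Zp p)"
  have "\<forall>p. prime p \<longrightarrow> openin (padic_topology p) (U p)"
    unfolding U_def using assms openin_padic_ball openin_Zp adeles_Qp[OF c] by auto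
  moreover have "finite {p. prime p \<and> U p \<noteq> Zp p}"
    by (rule finite_subset[OF _ \<open>finite F\<close>]) (auto simp: U_def)
  moreover have "adele_box c F r e =
      {a \<in> adeles. (\<forall>p. prime p \<longrightarrow> fst a p \<in> U p) \<and> snd a \<in> ball (snd c) e}"
    unfolding adele_box_def U_def by simp
  ultimately show ?thesis unfolding adele_basis_def by blast
qed

lemma openin_adele_box:
  "c \<in> adeles \<Longrightarrow> finite F \<Longrightarrow> r > 0 \<Longrightarrow> e > 0 \<Longrightarrow> openin adele_topology (adele_box c F r e)"
  unfolding adele_topology_def by (rule topology_generated_by_Basis, rule adele_box_in_basis)

lemma centre_in_adele_box:
  assumes c: "c \<in> adeles" and "nonintegral_primes c \<subseteq> F" "r > 0" "e > 0"
  shows "c \<in> adele_box c F r e"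
  using assms padic_ball_centre adeles_Qp[OF c] unfolding adele_box_def nonintegral_primes_def by auto

lemma adele_box_antimono:
  assumes F: "F \<subseteq> F'" and nonint: "nonintegral_primes c \<subseteq> F"
    and r: "r' \<le> r" "r' \<le> 1" and e: "e' \<le> e"
  shows "adele_box c F' r' e' \<subseteq> adele_box c F r e"
proof
  fix a assume a: "a \<in> adele_box c F' r' e'"
  have "fst a p \<in> (if p \<in> F then padic_ball p (fst c p) r else Zp p)" if p: "prime p" for p
  proof (cases "p \<in> F")
    case True
    hence "p \<in> F'" using F by blast
    moreover have "fst a p \<in> (if p \<in> F' then padic_ball p (fst c p) r' else Zp p)"
      using a p unfolding mem_adele_box by blast
    ultimately have "fst a p \<in> padic_ball p (fst c p) r'" by simp
    thus ?thesis using True padic_ball_mono[OF r(1)] by auto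
  next
    case False
    hence "fst c p \<in> Zp p" using nonint p unfolding nonintegral_primes_def by blast
    hence "padic_ball p (fst c p) r' \<subseteq> Zp p" by (rule padic_ball_subset_Zp[OF p _ r(2)])
    thus ?thesis using a p False unfolding mem_adele_box by (auto split: if_splits)
  qed
  thus "a \<in> adele_box c F r e" using a e unfolding mem_adele_box by auto
qed

lemma admissible_box_Int:
  assumes "admissible_box c F1 r1 e1" "admissible_box c F2 r2 e2"
  shows "admissible_box c (F1 \<union> F2) (min r1 r2) (min e1 e2)"
    and "adele_box c (F1 \<union> F2) (min r1 r2) (min e1 e2) \<subseteq> adele_box c F1 r1 e1 \<inter> adele_box c F2 r2 e2"
proof -
  show "admissible_box c (F1 \<union> F2) (min r1 r2) (min e1 e2)"
    using assms unfolding admissible_box_def by auto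
  have "adele_box c (F1 \<union> F2) (min r1 r2) (min e1 e2) \<subseteq> adele_box c F1 r1 e1"
    by (rule adele_box_antimono) (use assms in \<open>auto simp: admissible_box_def\<close>)
  moreover have "adele_box c (F1 \<union> F2) (min r1 r2) (min e1 e2) \<subseteq> adele_box c F2 r2 e2"
    by (rule adele_box_antimono) (use assms in \<open>auto simp: admissible_box_def\<close>)
  ultimately show "adele_box c (F1 \<union> F2) (min r1 r2) (min e1 e2) \<subseteq>
      adele_box c F1 r1 e1 \<inter> adele_box c F2 r2 e2" by blast
qed

lemma basis_contains_adele_box:
  assumes B: "B \<in> adele_basis" and c: "c \<in> B"
  shows "\<exists>F r e. admissible_box c F r e \<and> adele_box c F r e \<subseteq> B"
proof -
  obtain U V where B_eq: "B = {a \<in> adeles. (\<forall>p. prime p \<longrightarrow> fst a p \<in> U p) \<and> snd a \<in> V}"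
    and U: "\<forall>p. prime p \<longrightarrow> openin (padic_topology p) (U p)"
    and fin: "finite {p. prime p \<and> U p \<noteq> Zp p}" and V: "open V"
    using B unfolding adele_basis_def by blast
  have cA: "c \<in> adeles" using c B_eq by auto
  define F where "F = {p. prime p \<and> U p \<noteq> Zp p} \<union> nonintegral_primes c"
  have F: "finite F" unfolding F_def using fin finite_nonintegral_primes[OF cA] by simp
  have "\<exists>r>0. padic_ball p (fst c p) r \<subseteq> U p" if "p \<in> F" for p
  proof -
    have "prime p" using that unfolding F_def nonintegral_primes_def by auto
    thus ?thesis using openin_padic_topology_contains_ball U c B_eq by auto
  qed
  then obtain R where R: "\<forall>p\<in>F. R p > 0 \<and> padic_ball p (fst c p) (R p) \<subseteq> U p"
    using bchoice[of F "\<lambda>p r. r > 0 \<and> padic_ball p (fst c p) r \<subseteq> U p"] by blast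
  have pos: "\<And>p. p \<in> F \<Longrightarrow> R p > 0" using R by blast
  obtain r where r: "0 < r" "r \<le> 1" "\<And>p. p \<in> F \<Longrightarrow> r \<le> R p"
    using finite_pos_lower_bound[OF F, of R, OF pos] by blast
  obtain e where e: "e > 0" "ball (snd c) e \<subseteq> V" using V c B_eq open_contains_ball by blast
  have "adele_box c F r e \<subseteq> B"
  proof
    fix a assume a: "a \<in> adele_box c F r e"
    have "fst a p \<in> U p" if p: "prime p" for p
    proof (cases "p \<in> F")
      case True
      hence "fst a p \<in> padic_ball p (fst c p) r" using a p unfolding adele_box_def by auto
      thus ?thesis using padic_ball_mono[OF r(3)[OF True]] R True by blast
    next
      case False
      hence "fst a p \<in> Zp p" "U p = Zp p" using a p unfolding adele_box_def F_def by auto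
      thus ?thesis by simp
    qed
    moreover have "snd a \<in> V" using a e unfolding adele_box_def by auto
    ultimately show "a \<in> B" using a B_eq unfolding adele_box_def by auto
  qed
  moreover have "admissible_box c F r e"
    unfolding admissible_box_def F_def using F r e F_def by auto
  ultimately show ?thesis by blast
qed

lemma openin_adele_topology_contains_box:
  assumes W: "openin adele_topology W" and c: "c \<in> W"
  shows "\<exists>F r e. admissible_box c F r e \<and> adele_box c F r e \<subseteq> W"
proof -
  have "generate_topology_on adele_basis W"
    using W unfolding adele_topology_def by (rule openin_topology_generated_by)
  hence "\<exists>i. (\<lambda>(F, r, e). admissible_box c F r e) i \<and> (\<lambda>(F, r, e). adele_box c F r e) i \<subseteq> W"
  proof (rule generate_topology_on_local_base[OF _ c])
    fix B c assume "B \<in> adele_basis" "c \<in> B"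
    then obtain F r e where "admissible_box c F r e" "adele_box c F r e \<subseteq> B"
      using basis_contains_adele_box by blast
    thus "\<exists>i. (\<lambda>(F, r, e). admissible_box c F r e) i \<and> (\<lambda>(F, r, e). adele_box c F r e) i \<subseteq> B"
      by (intro exI[of _ "(F, r, e)"]) simp
  next
    fix c i j
    assume i: "(\<lambda>(F, r, e). admissible_box c F r e) i" and j: "(\<lambda>(F, r, e). admissible_box c F r e) j"
    obtain F1 r1 e1 F2 r2 e2 where ij: "i = (F1, r1, e1)" "j = (F2, r2, e2)"
      by (cases i, cases j) blast
    show "\<exists>k. (\<lambda>(F, r, e). admissible_box c F r e) k \<and>
        (\<lambda>(F, r, e). adele_box c F r e) k \<subseteq>
        (\<lambda>(F, r, e). adele_box c F r e) i \<inter> (\<lambda>(F, r, e). adele_box c F r e) j"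
      using admissible_box_Int[of c F1 r1 e1 F2 r2 e2] i j unfolding ij
      by (intro exI[of _ "(F1 \<union> F2, min r1 r2, min e1 e2)"]) simp
  qed
  thus ?thesis by auto
qed

lemma topspace_adele_topology: "topspace adele_topology = adeles"
proof -
  have "adeles \<subseteq> \<Union>adele_basis"
  proof
    fix c assume c: "c \<in> adeles"
    have "c \<in> adele_box c (nonintegral_primes c) 1 1" by (rule centre_in_adele_box[OF c]) auto
    moreover have "adele_box c (nonintegral_primes c) 1 1 \<in> adele_basis"
      by (rule adele_box_in_basis[OF c finite_nonintegral_primes[OF c]]) auto
    ultimately show "c \<in> \<Union>adele_basis" by blast
  qed
  moreover have "\<Union>adele_basis \<subseteq> adeles" unfolding adele_basis_def by auto
  ultimately show ?thesis unfolding adele_topology_def by simp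
qed

lemma in_adele_closure_iff:
  "c \<in> adele_topology closure_of S \<longleftrightarrow>
     c \<in> adeles \<and> (\<forall>F r e. admissible_box c F r e \<longrightarrow> adele_box c F r e \<inter> S \<noteq> {})"
proof
  assume c: "c \<in> adele_topology closure_of S"
  hence cA: "c \<in> adeles" using closure_of_subset_topspace[of adele_topology S]
    unfolding topspace_adele_topology by blast
  have "adele_box c F r e \<inter> S \<noteq> {}" if "admissible_box c F r e" for F r e
  proof -
    have "openin adele_topology (adele_box c F r e)" "c \<in> adele_box c F r e"
      using that cA unfolding admissible_box_def
      by (simp_all add: openin_adele_box centre_in_adele_box)
    thus ?thesis using c unfolding in_closure_of by blast
  qed
  thus "c \<in> adeles \<and> (\<forall>F r e. admissible_box c F r e \<longrightarrow> adele_box c F r e \<inter> S \<noteq> {})"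
    using cA by blast
next
  assume c: "c \<in> adeles \<and> (\<forall>F r e. admissible_box c F r e \<longrightarrow> adele_box c F r e \<inter> S \<noteq> {})"
  have "\<exists>y. y \<in> S \<and> y \<in> T" if T: "c \<in> T" "openin adele_topology T" for T
  proof -
    obtain F r e where "admissible_box c F r e" "adele_box c F r e \<subseteq> T"
      using openin_adele_topology_contains_box[OF T(2,1)] by blast
    thus ?thesis using c by blast
  qed
  thus "c \<in> adele_topology closure_of S"
    unfolding in_closure_of topspace_adele_topology using c by blast
qed

section \<open>The action of Q^* and the invariant chi on invertible adeles\<close>

lemma adeles_eqI:
  assumes "a \<in> adeles" "b \<in> adeles" "\<And>p. prime p \<Longrightarrow> fst a p = fst b p" "snd a = snd b"
  shows "a = b"
proof -
  have "fst a p = fst b p" for p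
    using assms unfolding adeles_def by (cases "prime p") auto
  thus ?thesis using assms(4) by (simp add: prod_eq_iff ext)
qed

lemma rat_act_fst: "prime p \<Longrightarrow> fst (rat_act q a) p = padic_smult p q (fst a p)"
  unfolding rat_act_def by simp

lemma rat_act_snd: "snd (rat_act q a) = of_rat q * snd a"
  unfolding rat_act_def by simp

lemma padic_abs_rat_act:
  assumes "a \<in> adeles" "prime p"
  shows "fst (rat_act q a) p \<in> Qp p"
    and "padic_abs p (fst (rat_act q a) p) = rat_pabs p q * padic_abs p (fst a p)"
  using assms padic_smult_in_Qp padic_abs_smult adeles_Qp by (simp_all add: rat_act_fst)

lemma rat_act_preserves_abs_almost_everywhere:
  assumes a: "a \<in> adeles" and q: "q \<noteq> 0"
    and P: "\<And>p x y. prime p \<Longrightarrow> x \<in> Qp p \<Longrightarrow> y \<in> Qp p \<Longrightarrow> padic_abs p x = padic_abs p y \<Longrightarrow>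
                P p x \<Longrightarrow> P p y"
    and fin: "finite {p. prime p \<and> \<not> P p (fst a p)}"
  shows "finite {p. prime p \<and> \<not> P p (fst (rat_act q a) p)}"
proof (rule finite_subset[OF _ finite_UnI[OF fin finite_rat_pabs_neq_1[OF q]]])
  show "{p. prime p \<and> \<not> P p (fst (rat_act q a) p)} \<subseteq>
        {p. prime p \<and> \<not> P p (fst a p)} \<union> {p. prime p \<and> rat_pabs p q \<noteq> 1}"
  proof
    fix p assume p: "p \<in> {p. prime p \<and> \<not> P p (fst (rat_act q a) p)}"
    hence pp: "prime p" by simp
    have "\<not> (P p (fst a p) \<and> rat_pabs p q = 1)"
      using p P[OF pp adeles_Qp[OF a pp] padic_abs_rat_act(1)[OF a pp]] padic_abs_rat_act(2)[OF a pp]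
      by auto
    thus "p \<in> {p. prime p \<and> \<not> P p (fst a p)} \<union> {p. prime p \<and> rat_pabs p q \<noteq> 1}"
      using pp by blast
  qed
qed

lemma rat_act_in_adeles:
  assumes a: "a \<in> adeles" and q: "q \<noteq> 0"
  shows "rat_act q a \<in> adeles"
proof -
  have "finite {p. prime p \<and> \<not> fst (rat_act q a) p \<in> Zp p}"
  proof (rule rat_act_preserves_abs_almost_everywhere[OF a q])
    show "finite {p. prime p \<and> \<not> fst a p \<in> Zp p}" using a unfolding adeles_def by simp
  qed (simp add: Zp_def)
  moreover have "fst (rat_act q a) p \<in> Qp p" if "prime p" for p
    using padic_abs_rat_act(1)[OF a that] .
  moreover have "fst (rat_act q a) p = {}" if "\<not> prime p" for p
    using that unfolding rat_act_def by simp
  ultimately show ?thesis unfolding adeles_def by blast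
qed

lemma rat_act_1: "a \<in> adeles \<Longrightarrow> rat_act 1 a = a"
  by (rule adeles_eqI)
    (simp_all add: rat_act_fst rat_act_snd padic_smult_1 adeles_Qp rat_act_in_adeles)

lemma rat_act_mult:
  assumes a: "a \<in> adeles" and q: "q \<noteq> 0" and r: "r \<noteq> 0"
  shows "rat_act q (rat_act r a) = rat_act (q * r) a"
proof (rule adeles_eqI)
  show "rat_act q (rat_act r a) \<in> adeles" "rat_act (q * r) a \<in> adeles"
    using rat_act_in_adeles a q r by simp_all
  show "fst (rat_act q (rat_act r a)) p = fst (rat_act (q * r) a) p" if p: "prime p" for p
    using rat_act_fst[OF p] padic_smult_smult[OF p adeles_Qp[OF a p]] by simp
  show "snd (rat_act q (rat_act r a)) = snd (rat_act (q * r) a)"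
    by (simp add: rat_act_snd of_rat_mult)
qed

lemma orbit_subset_adeles: "a \<in> adeles \<Longrightarrow> orbit a \<subseteq> adeles"
  unfolding orbit_def using rat_act_in_adeles by blast

lemma self_in_orbit: "a \<in> adeles \<Longrightarrow> a \<in> orbit a"
  unfolding orbit_def using rat_act_1 by (metis (mono_tags, lifting) mem_Collect_eq one_neq_zero)

lemma orbitE:
  assumes "b \<in> orbit a"
  obtains q where "q \<noteq> 0" "b = rat_act q a"
  using assms unfolding orbit_def by blast

lemma orbit_rat_act:
  assumes a: "a \<in> adeles" and r: "r \<noteq> 0"
  shows "orbit (rat_act r a) = orbit a"
proof
  show "orbit (rat_act r a) \<subseteq> orbit a"
  proof
    fix x assume "x \<in> orbit (rat_act r a)"
    then obtain q where "q \<noteq> 0" "x = rat_act q (rat_act r a)" by (rule orbitE)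
    hence "x = rat_act (q * r) a" "q * r \<noteq> 0" using rat_act_mult[OF a _ r] r by auto
    thus "x \<in> orbit a" unfolding orbit_def by blast
  qed
  show "orbit a \<subseteq> orbit (rat_act r a)"
  proof
    fix x assume "x \<in> orbit a"
    then obtain q where q: "q \<noteq> 0" "x = rat_act q a" by (rule orbitE)
    have "rat_act (q / r) (rat_act r a) = rat_act (q / r * r) a"
      using rat_act_mult[OF a _ r] q r by simp
    hence "x = rat_act (q / r) (rat_act r a)" "q / r \<noteq> 0" using q r by auto
    thus "x \<in> orbit (rat_act r a)" unfolding orbit_def by blast
  qed
qed

lemma adele_invertible_rat_act:
  assumes a: "a \<in> adeles" and inv: "adele_invertible a" and q: "q \<noteq> 0"
  shows "adele_invertible (rat_act q a)"
proof -
  have "finite {p. prime p \<and> \<not> fst (rat_act q a) p \<in> Zp_units p}"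
  proof (rule rat_act_preserves_abs_almost_everywhere[OF a q])
    show "finite {p. prime p \<and> \<not> fst a p \<in> Zp_units p}"
      using inv unfolding adele_invertible_def by simp
  qed (simp add: Zp_units_def)
  moreover have "fst (rat_act q a) p \<noteq> padic_zero p" if "prime p" for p
    using inv that padic_smult_eq_zero_iff[OF that adeles_Qp[OF a that] q] rat_act_fst[OF that]
    unfolding adele_invertible_def by simp
  moreover have "snd (rat_act q a) \<noteq> 0"
    using inv q unfolding adele_invertible_def rat_act_snd by simp
  ultimately show ?thesis unfolding adele_invertible_def by blast
qed

definition chi_scalar :: "adele \<Rightarrow> rat" where
  "chi_scalar a = (if snd a > 0 then 1 else -1) *
     (\<Prod>p\<in>{p. prime p \<and> adele_val p a \<noteq> 0}. (of_nat p :: rat) powi (- adele_val p a))"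

definition zero_places :: "adele \<Rightarrow> nat option set" where
  "zero_places a = {Some p | p. prime p \<and> fst a p = padic_zero p} \<union> (if snd a = 0 then {None} else {})"

lemma chi_invertible: "adele_invertible a \<Longrightarrow> chi a = Inr (rat_act (chi_scalar a) a)"
  unfolding chi_def chi_scalar_def by simp

lemma chi_not_invertible: "\<not> adele_invertible a \<Longrightarrow> chi a = Inl (zero_places a)"
  unfolding chi_def zero_places_def by simp

lemma chi_scalar_prod_pos:
  "(\<Prod>p\<in>{p. prime p \<and> adele_val p a \<noteq> 0}. (of_nat p :: rat) powi (- adele_val p a)) > 0"
  by (rule prod_pos) (simp add: prime_gt_0_nat)

lemma chi_scalar_nonzero: "chi_scalar a \<noteq> 0"
  using chi_scalar_prod_pos[of a] unfolding chi_scalar_def by auto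

lemma finite_adele_val_nonzero:
  assumes a: "a \<in> adeles" and inv: "adele_invertible a"
  shows "finite {p. prime p \<and> adele_val p a \<noteq> 0}"
proof (rule finite_subset)
  show "finite {p. prime p \<and> fst a p \<notin> Zp_units p}" using inv unfolding adele_invertible_def by simp
  show "{p. prime p \<and> adele_val p a \<noteq> 0} \<subseteq> {p. prime p \<and> fst a p \<notin> Zp_units p}"
  proof
    fix p assume p: "p \<in> {p. prime p \<and> adele_val p a \<noteq> 0}"
    hence pp: "prime p" by simp
    have "fst a p \<noteq> padic_zero p" using inv pp unfolding adele_invertible_def by auto
    hence "padic_abs p (fst a p) = real p powi (- adele_val p a)"
      using padic_abs_eq_power_int_padic_val[OF pp adeles_Qp[OF a pp]] unfolding adele_val_def by simp
    moreover have "real p powi (- adele_val p a) \<noteq> real p powi 0"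
      using p power_int_inj[of "real p" "- adele_val p a" 0] prime_gt_1_nat[OF pp] by auto
    ultimately show "p \<in> {p. prime p \<and> fst a p \<notin> Zp_units p}"
      using pp unfolding Zp_units_def by auto
  qed
qed

lemma rat_pabs_chi_scalar:
  assumes a: "a \<in> adeles" and inv: "adele_invertible a" and l: "prime l"
  shows "rat_pabs l (chi_scalar a) = real l powi (adele_val l a)"
proof -
  define V where "V = {p. prime p \<and> adele_val p a \<noteq> 0}"
  have "rat_pabs l (if snd a > 0 then 1 else -1) = 1" using rat_pabs_minus[OF l, of 1] l by auto
  moreover have "rat_pabs l (\<Prod>p\<in>V. (of_nat p :: rat) powi (- adele_val p a)) =
        (\<Prod>p\<in>V. if p = l then real l powi (adele_val l a) else 1)"
    unfolding rat_pabs_prod[OF l]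
      by (rule prod.cong) (auto simp: V_def rat_pabs_of_nat_prime_power_int[OF l])
  moreover have "(\<Prod>p\<in>V. if p = l then real l powi (adele_val l a) else 1) = real l powi (adele_val l a)"
    using finite_adele_val_nonzero[OF a inv] l unfolding V_def by auto
  ultimately show ?thesis unfolding chi_scalar_def V_def[symmetric]
    by (simp add: rat_pabs_mult[OF l])
qed

lemma rat_act_chi_scalar_in_units_U:
  assumes a: "a \<in> adeles" and inv: "adele_invertible a"
  shows "rat_act (chi_scalar a) a \<in> units_U"
proof -
  have "fst (rat_act (chi_scalar a) a) p \<in> Zp_units p" if p: "prime p" for p
  proof -
    have "fst a p \<noteq> padic_zero p" using inv p unfolding adele_invertible_def by auto
    hence "padic_abs p (fst (rat_act (chi_scalar a) a) p) =
           real p powi (adele_val p a) * real p powi (- adele_val p a)"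
      using padic_abs_rat_act[OF a p] rat_pabs_chi_scalar[OF a inv p]
        padic_abs_eq_power_int_padic_val[OF p adeles_Qp[OF a p]]
      unfolding adele_val_def by simp
    also have "\<dots> = 1" using prime_gt_0_nat[OF p] by (simp add: power_int_minus)
    finally show ?thesis unfolding Zp_units_def using padic_abs_rat_act(1)[OF a p] by simp
  qed
  moreover have "snd (rat_act (chi_scalar a) a) > 0"
    using chi_scalar_prod_pos[of a] inv unfolding adele_invertible_def rat_act_snd chi_scalar_def
    by (cases "snd a > 0") (auto simp: of_rat_mult zero_less_mult_iff)
  ultimately show ?thesis
    unfolding units_U_def using rat_act_in_adeles[OF a chi_scalar_nonzero] by simp
qed

lemma units_U_adeles: "u \<in> units_U \<Longrightarrow> u \<in> adeles"
  unfolding units_U_def by simp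

lemma eq_1_if_rat_act_in_units_U:
  assumes u: "u \<in> units_U" and t: "t \<noteq> 0" and v: "rat_act t u \<in> units_U"
  shows "t = 1"
proof (rule rat_eq_1_if_pabs_eq_1)
  fix p :: nat assume p: "prime p"
  have "fst u p \<in> Zp_units p" "fst (rat_act t u) p \<in> Zp_units p"
    using u v p unfolding units_U_def by blast+
  hence "padic_abs p (fst u p) = 1" "padic_abs p (fst (rat_act t u) p) = 1"
    unfolding Zp_units_def by blast+
  thus "rat_pabs p t = 1" using padic_abs_rat_act(2)[OF units_U_adeles[OF u] p] by simp
next
  have "snd u > 0" "of_rat t * snd u > 0" using u v rat_act_snd unfolding units_U_def by auto
  thus "t > 0" by (simp add: zero_less_mult_iff)
qed

lemma adele_invertible_if_in_units_U:
  assumes u: "u \<in> units_U"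
  shows "adele_invertible u"
proof -
  have U: "\<forall>p. prime p \<longrightarrow> fst u p \<in> Zp_units p" "snd u > 0" using u unfolding units_U_def by auto
  have "fst u p \<noteq> padic_zero p" if p: "prime p" for p
  proof
    assume "fst u p = padic_zero p"
    moreover have "padic_abs p (fst u p) = 1" using U(1) p unfolding Zp_units_def by blast
    ultimately show False using padic_abs_zero[OF p] by simp
  qed
  moreover have "{p. prime p \<and> fst u p \<notin> Zp_units p} = {}" using U(1) by blast
  hence "finite {p. prime p \<and> fst u p \<notin> Zp_units p}" by (simp only: finite.emptyI)
  ultimately show ?thesis using U(2) unfolding adele_invertible_def by simp
qed

lemma chi_units_U:
  assumes u: "u \<in> units_U"
  shows "chi u = Inr u"
proof -
  have inv: "adele_invertible u" using adele_invertible_if_in_units_U[OF u] .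
  have "chi_scalar u = 1"
    using eq_1_if_rat_act_in_units_U[OF u chi_scalar_nonzero]
      rat_act_chi_scalar_in_units_U[OF units_U_adeles[OF u] inv] by blast
  thus ?thesis using chi_invertible[OF inv] rat_act_1[OF units_U_adeles[OF u]] by simp
qed

lemma chi_eq_iff_in_orbit:
  assumes a: "a \<in> adeles" "adele_invertible a" and b: "b \<in> adeles" "adele_invertible b"
  shows "chi a = chi b \<longleftrightarrow> b \<in> orbit a"
proof
  assume "chi a = chi b"
  hence e: "rat_act (chi_scalar a) a = rat_act (chi_scalar b) b" using chi_invertible a b by simp
  have "b = rat_act (1 / chi_scalar b) (rat_act (chi_scalar b) b)"
    using rat_act_mult[OF b(1), of "1 / chi_scalar b" "chi_scalar b"] chi_scalar_nonzero rat_act_1[OF b(1)]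
    by simp
  also have "\<dots> = rat_act (1 / chi_scalar b * chi_scalar a) a"
    unfolding e[symmetric] by (rule rat_act_mult[OF a(1)]) (use chi_scalar_nonzero in auto)
  finally show "b \<in> orbit a"
    unfolding orbit_def using chi_scalar_nonzero
      by (intro CollectI exI[of _ "1 / chi_scalar b * chi_scalar a"]) simp
next
  assume "b \<in> orbit a"
  then obtain r where r: "r \<noteq> 0" "b = rat_act r a" by (rule orbitE)
  define u where "u = rat_act (chi_scalar a) a"
  define t where "t = chi_scalar b * r / chi_scalar a"
  have u: "u \<in> units_U" using rat_act_chi_scalar_in_units_U[OF a] u_def by simp
  have t: "t \<noteq> 0" using chi_scalar_nonzero r unfolding t_def by simp
  have bt: "rat_act (chi_scalar b) b = rat_act t u"
    using r rat_act_mult[OF a(1)] rat_act_mult[OF rat_act_in_adeles[OF a(1) chi_scalar_nonzero]]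
      chi_scalar_nonzero unfolding u_def t_def by simp
  hence "t = 1" using eq_1_if_rat_act_in_units_U[OF u t] rat_act_chi_scalar_in_units_U[OF b] by simp
  hence "rat_act (chi_scalar b) b = u" using bt rat_act_1[OF units_U_adeles[OF u]] by simp
  thus "chi a = chi b" using chi_invertible a b u_def by simp
qed

section \<open>Orbit closures of invertible adeles\<close>

lemma snd_eq_0_if_in_closure_orbit:
  assumes c: "c \<in> adele_topology closure_of orbit a" and a: "snd a = 0"
  shows "snd c = 0"
proof (rule ccontr)
  assume sc: "snd c \<noteq> 0"
  have cA: "c \<in> adeles" using c unfolding in_adele_closure_iff by blast
  have "admissible_box c (nonintegral_primes c) 1 \<bar>snd c\<bar>"
    unfolding admissible_box_def using finite_nonintegral_primes[OF cA] sc by simp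
  then obtain x where x: "x \<in> adele_box c (nonintegral_primes c) 1 \<bar>snd c\<bar>" "x \<in> orbit a"
    using c unfolding in_adele_closure_iff by blast
  from x(2) obtain q where "x = rat_act q a" by (rule orbitE)
  hence "snd x = 0" using a rat_act_snd by simp
  moreover have "dist (snd c) (snd x) < \<bar>snd c\<bar>" using x(1) unfolding mem_adele_box by blast
  ultimately show False by (simp add: dist_real_def)
qed

lemma fst_eq_zero_if_in_closure_orbit:
  assumes c: "c \<in> adele_topology closure_of orbit a" and p: "prime p" and a: "fst a p = padic_zero p"
  shows "fst c p = padic_zero p"
proof (rule ccontr)
  assume cp: "fst c p \<noteq> padic_zero p"
  have cA: "c \<in> adeles" using c unfolding in_adele_closure_iff by blast
  have cq: "fst c p \<in> Qp p" by (rule adeles_Qp[OF cA p])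
  define r where "r = min 1 (padic_abs p (fst c p))"
  have "admissible_box c (insert p (nonintegral_primes c)) r 1"
    unfolding admissible_box_def r_def using finite_nonintegral_primes[OF cA] padic_abs_pos[OF p cq cp]
    by auto
  then obtain x where x: "x \<in> adele_box c (insert p (nonintegral_primes c)) r 1" "x \<in> orbit a"
    using c unfolding in_adele_closure_iff by blast
  from x(2) obtain q where "x = rat_act q a" by (rule orbitE)
  hence "fst x p = padic_zero p" using p a rat_act_fst padic_smult_zero by simp
  moreover have "fst x p \<in> padic_ball p (fst c p) r" using x(1) p unfolding mem_adele_box by auto
  ultimately have "padic_dist p (fst c p) (padic_zero p) < r" unfolding padic_ball_def by simp
  thus False using padic_dist_zero_right[OF p cq] unfolding r_def by simp
qed

lemma zero_places_subset_closure:
  assumes c: "c \<in> adele_topology closure_of orbit a"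
  shows "zero_places a \<subseteq> zero_places c"
  using snd_eq_0_if_in_closure_orbit[OF c] fst_eq_zero_if_in_closure_orbit[OF c]
  unfolding zero_places_def by auto

lemma adele_box_separates:
  assumes c: "c \<in> adeles" and x: "x \<in> adeles" and ne: "c \<noteq> x"
  obtains F r e where "admissible_box c F r e" "x \<notin> adele_box c F r e"
proof (cases "snd c = snd x")
  case False
  have "admissible_box c (nonintegral_primes c) 1 \<bar>snd c - snd x\<bar>"
    unfolding admissible_box_def using finite_nonintegral_primes[OF c] False by simp
  moreover have "x \<notin> adele_box c (nonintegral_primes c) 1 \<bar>snd c - snd x\<bar>"
    unfolding mem_adele_box by (simp add: dist_real_def)
  ultimately show ?thesis using that by blast
next
  case True
  then obtain p where p: "prime p" "fst c p \<noteq> fst x p" using adeles_eqI[OF c x] ne by blast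
  have q: "fst c p \<in> Qp p" "fst x p \<in> Qp p" using adeles_Qp c x p(1) by auto
  define d where "d = padic_dist p (fst c p) (fst x p)"
  have d0: "d > 0"
    using padic_dist_nonneg[OF p(1) q] padic_dist_eq_0_iff[OF p(1) q] p(2)
      unfolding d_def by linarith
  have "admissible_box c (insert p (nonintegral_primes c)) (min 1 d) 1"
    unfolding admissible_box_def using finite_nonintegral_primes[OF c] d0 by auto
  moreover have "x \<notin> adele_box c (insert p (nonintegral_primes c)) (min 1 d) 1"
    using p(1) unfolding mem_adele_box padic_ball_def d_def by auto
  ultimately show ?thesis using that by blast
qed

lemma padic_dist_in_adele_box:
  assumes x: "x \<in> adele_box c F r e" and y: "y \<in> adele_box c F r e" and c: "c \<in> adeles"
    and r: "r \<le> 1" and p: "prime p"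
  shows "padic_dist p (fst x p) (fst y p) \<le> (if p \<in> F then r else 1)"
proof -
  have xy: "fst x p \<in> Qp p" "fst y p \<in> Qp p"
    using x y p adeles_Qp unfolding mem_adele_box by blast+
  have cp: "fst c p \<in> Qp p" by (rule adeles_Qp[OF c p])
  show ?thesis
  proof (cases "p \<in> F")
    case True
    hence "padic_dist p (fst c p) (fst x p) < r" "padic_dist p (fst c p) (fst y p) < r"
      using x y p unfolding mem_adele_box padic_ball_def by auto
    thus ?thesis
      using True padic_dist_ultrametric[OF p xy(1) cp xy(2)] padic_dist_commute[OF p xy(1) cp] by simp
  next
    case False
    hence "padic_abs p (fst x p) \<le> 1" "padic_abs p (fst y p) \<le> 1"
      using x y p unfolding mem_adele_box Zp_def by auto
    thus ?thesis
      using False padic_dist_ultrametric[OF p xy(1) padic_zero_in_Qp[OF p] xy(2)]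
        padic_dist_zero_left[OF p xy(2)] padic_dist_zero_right[OF p xy(1)] by simp
  qed
qed

lemma rat_pabs_diff_le_1_if_smult_close:
  assumes p: "prime p" and x: "x \<in> Qp p" "x \<noteq> padic_zero p"
    and d: "padic_dist p (padic_smult p q x) (padic_smult p q' x) \<le> padic_abs p x"
  shows "rat_pabs p (q - q') \<le> 1"
proof -
  have "rat_pabs p (q - q') * padic_abs p x \<le> 1 * padic_abs p x"
    using d padic_dist_smult_left[OF p x(1)] by simp
  thus ?thesis using padic_abs_pos[OF p x] by (rule mult_right_le_imp_le)
qed

text \<open>If q a and q' a lie in the box below, then q - q' is integral at every prime, hence an integer,
  and smaller than 1 in absolute value at infinity.\<close>
lemma orbit_discrete:
  assumes a: "a \<in> adeles" and inv: "adele_invertible a" and c: "c \<in> adeles"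
  obtains F r e where "admissible_box c F r e"
    "\<And>q q'. rat_act q a \<in> adele_box c F r e \<Longrightarrow> rat_act q' a \<in> adele_box c F r e \<Longrightarrow> q = q'"
proof -
  have nz: "fst a p \<noteq> padic_zero p" if "prime p" for p
    using inv that unfolding adele_invertible_def by blast
  define N where "N = {p. prime p \<and> fst a p \<notin> Zp_units p}"
  have N: "finite N" using inv unfolding adele_invertible_def N_def by simp
  have pos: "\<And>p. p \<in> N \<Longrightarrow> padic_abs p (fst a p) > 0"
    using padic_abs_pos adeles_Qp[OF a] nz unfolding N_def by simp
  obtain r where r: "0 < r" "r \<le> 1" "\<forall>p\<in>N. r \<le> padic_abs p (fst a p)"
    using finite_pos_lower_bound[OF N, of "\<lambda>p. padic_abs p (fst a p)", OF pos] by blast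
  define F where "F = nonintegral_primes c \<union> N"
  define e where "e = \<bar>snd a\<bar> / 2"
  have e: "e > 0" using inv unfolding adele_invertible_def e_def by simp
  have box: "admissible_box c F r e"
    unfolding admissible_box_def F_def using N finite_nonintegral_primes[OF c] r e by simp
  have "q = q'" if q: "rat_act q a \<in> adele_box c F r e" and q': "rat_act q' a \<in> adele_box c F r e"
    for q q'
  proof -
    have "rat_pabs p (q - q') \<le> 1" if p: "prime p" for p
    proof (rule rat_pabs_diff_le_1_if_smult_close[OF p adeles_Qp[OF a p] nz[OF p]])
      have "(if p \<in> F then r else 1) \<le> padic_abs p (fst a p)"
        using r(2,3) p adeles_Qp[OF a p] unfolding F_def N_def Zp_units_def by auto
      thus "padic_dist p (padic_smult p q (fst a p)) (padic_smult p q' (fst a p)) \<le> padic_abs p (fst a p)"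
        using padic_dist_in_adele_box[OF q q' c r(2) p] by (simp add: rat_act_fst[OF p])
    qed
    hence "q - q' \<in> \<int>" by (rule rat_pabs_le_1_imp_Ints)
    have "dist (snd c) (of_rat q * snd a) < e" "dist (snd c) (of_rat q' * snd a) < e"
      using q q' unfolding mem_adele_box rat_act_snd by auto
    hence "\<bar>of_rat q * snd a - of_rat q' * snd a\<bar> < \<bar>snd a\<bar>"
      unfolding e_def dist_real_def by linarith
    hence "\<bar>of_rat (q - q')\<bar> * \<bar>snd a\<bar> < 1 * \<bar>snd a\<bar>"
      by (simp add: of_rat_diff abs_mult[symmetric] left_diff_distrib)
    hence "\<bar>q - q'\<bar> < 1" using e unfolding e_def by (simp add: mult_less_cancel_right2)
    thus "q = q'" using Ints_nonzero_abs_less1[OF \<open>q - q' \<in> \<int>\<close>] by simp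
  qed
  thus ?thesis using that box by blast
qed

lemma closure_orbit_invertible:
  assumes a: "a \<in> adeles" and inv: "adele_invertible a"
  shows "adele_topology closure_of orbit a = orbit a"
proof
  show "orbit a \<subseteq> adele_topology closure_of orbit a"
    by (rule closure_of_subset) (simp add: topspace_adele_topology orbit_subset_adeles[OF a])
next
  show "adele_topology closure_of orbit a \<subseteq> orbit a"
  proof
    fix c assume c: "c \<in> adele_topology closure_of orbit a"
    have cA: "c \<in> adeles"
      and meets: "\<And>F r e. admissible_box c F r e \<Longrightarrow> adele_box c F r e \<inter> orbit a \<noteq> {}"
      using c unfolding in_adele_closure_iff by auto
    obtain F r e where box: "admissible_box c F r e" and
      unique: "\<And>q q'. rat_act q a \<in> adele_box c F r e \<Longrightarrow> rat_act q' a \<in> adele_box c F r e \<Longrightarrow> q = q'"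
      using orbit_discrete[OF a inv cA] by blast
    obtain x where x: "x \<in> adele_box c F r e" "x \<in> orbit a" using meets[OF box] by blast
    show "c \<in> orbit a"
    proof (rule ccontr)
      assume "c \<notin> orbit a"
      hence "c \<noteq> x" using x by blast
      then obtain F' r' e' where box': "admissible_box c F' r' e'" "x \<notin> adele_box c F' r' e'"
        using adele_box_separates[OF cA] x orbit_subset_adeles[OF a] by blast
      obtain y where y: "y \<in> adele_box c (F \<union> F') (min r r') (min e e')" "y \<in> orbit a"
        using meets[OF admissible_box_Int(1)[OF box box'(1)]] by blast
      have "y \<in> adele_box c F r e" "y \<in> adele_box c F' r' e'"
        using y(1) admissible_box_Int(2)[OF box box'(1)] by auto
      moreover have "y = x" using unique x y \<open>y \<in> adele_box c F r e\<close> by (metis orbitE)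
      ultimately show False using box'(2) by simp
    qed
  qed
qed

section \<open>Approximation in Q\<close>

lemma rat_approx_at_prime:
  assumes p: "prime p" and eps: "\<epsilon> > 0"
  obtains y where "rat_pabs p (z - y) < \<epsilon>" "\<And>l. prime l \<Longrightarrow> l \<noteq> p \<Longrightarrow> rat_pabs l y \<le> 1"
proof -
  obtain n d where nd: "quotient_of z = (n, d)" by (cases "quotient_of z") auto
  have d: "d > 0" and z: "z = of_int n / of_int d"
    using quotient_of_denom_pos[OF nd] quotient_of_div[OF nd] by auto
  define P where "P = int p"
  have P: "prime P" "\<not> is_unit P" using p not_prime_unit unfolding P_def by auto
  define j where "j = multiplicity P d"
  obtain d' where d': "d = P ^ j * d'" "\<not> P dvd d'"
    using multiplicity_decompose'[of d P] d P(2) unfolding j_def by auto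
  have d'0: "d' \<noteq> 0" using d' d by auto
  have "1 / real p < 1" using prime_gt_1_nat[OF p] by simp
  then obtain k where k: "(1 / real p) ^ k < \<epsilon>" using real_arch_pow_inv[OF eps] by blast
  have "coprime d' (P ^ (k + j))" using d'(2) P(1) by (simp add: prime_imp_coprime coprime_commute)
  then obtain u v where uv: "u * d' + v * P ^ (k + j) = 1"
    using bezout_int[of d' "P ^ (k + j)"] by auto
  \<comment> \<open>y = n u / P^j is integral away from p, and z - y = n v P^k / d' is divisible by P^k\<close>
  define y :: rat where "y = of_int (n * u) / of_int (P ^ j)"
  have P0: "(of_int P :: rat) \<noteq> 0" using P by auto
  have uvq: "1 - of_int u * of_int d' = of_int v * (of_int P :: rat) ^ (k + j)"
    using arg_cong[OF uv, of "of_int :: int \<Rightarrow> rat"] by (simp add: algebra_simps)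
  have "z - y = of_int n * (1 - of_int u * of_int d') / (of_int P ^ j * of_int d')"
    unfolding z y_def d'(1) using P0 d'0 by (simp add: field_simps)
  also have "\<dots> = of_int (n * v) * of_int P ^ k / of_int d'"
    unfolding uvq using P0 d'0 by (simp add: field_simps power_add)
  finally have zy: "z - y = of_int (n * v) * (of_nat p) ^ k / of_int d'" unfolding P_def by simp
  have "rat_pabs p (of_int d') = 1"
    using rat_pabs_of_int_not_dvd[OF p] d'(2) unfolding P_def by simp
  hence "rat_pabs p (z - y) = rat_pabs p (of_int (n * v)) * (1 / real p) ^ k"
    unfolding zy by (simp add: rat_pabs_mult[OF p] rat_pabs_divide[OF p] rat_pabs_power[OF p]
        rat_pabs_of_nat_self[OF p])
  also have "\<dots> \<le> (1 / real p) ^ k"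
    using rat_pabs_of_int_le_1[OF p, of "n * v"] rat_pabs_nonneg[OF p]
      by (intro mult_left_le_one_le) auto
  finally have "rat_pabs p (z - y) < \<epsilon>" using k by simp
  moreover have "rat_pabs l y \<le> 1" if l: "prime l" "l \<noteq> p" for l
  proof -
    have "rat_pabs l (of_int (P ^ j)) = 1"
      using rat_pabs_power[OF l(1), of "of_nat p" j] rat_pabs_of_nat_prime[OF l(1) p] l(2)
      unfolding P_def by simp
    thus ?thesis
      unfolding y_def using rat_pabs_divide[OF l(1)] rat_pabs_of_int_le_1[OF l(1), of "n * u"] by simp
  qed
  ultimately show ?thesis using that by blast
qed

text \<open>The corrections are added one prime at a time, scaled by the previous M so that they do not
  disturb the primes already treated.\<close>
lemma rat_strong_approximation:
  assumes "finite F" "\<forall>p\<in>F. prime p" and del: "\<delta> > 0"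
  shows "\<exists>q0 (M::int). M > 0 \<and> (\<forall>p\<in>F. rat_pabs p (q0 - \<beta> p) < \<delta> \<and> rat_pabs p (of_int M) < \<delta>) \<and>
          (\<forall>l. prime l \<longrightarrow> l \<notin> F \<longrightarrow> rat_pabs l q0 \<le> 1)"
  using assms(1,2)
proof (induction F rule: finite_induct)
  case empty
  show ?case by (intro exI[of _ 0] exI[of _ 1]) simp
next
  case (insert p F)
  have p: "prime p" using insert by simp
  obtain q0 M where M: "M > 0" and IH: "\<forall>p\<in>F. rat_pabs p (q0 - \<beta> p) < \<delta> \<and> rat_pabs p (of_int M) < \<delta>"
      "\<forall>l. prime l \<longrightarrow> l \<notin> F \<longrightarrow> rat_pabs l q0 \<le> 1"
    using insert by blast
  have Mp: "rat_pabs p (of_int M) > 0" using rat_pabs_pos[OF p] M by simp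
  define z where "z = (\<beta> p - q0) / of_int M"
  obtain y where y: "rat_pabs p (z - y) < \<delta> / rat_pabs p (of_int M)"
    "\<And>l. prime l \<Longrightarrow> l \<noteq> p \<Longrightarrow> rat_pabs l y \<le> 1"
    using rat_approx_at_prime[OF p, of "\<delta> / rat_pabs p (of_int M)" z] del Mp by auto
  have "1 / real p < 1" using prime_gt_1_nat[OF p] by simp
  then obtain k where k: "(1 / real p) ^ k < \<delta>" using real_arch_pow_inv[OF del] by blast
  define q0' where "q0' = q0 + of_int M * y"
  define M' where "M' = M * int p ^ k"
  have "q0' - \<beta> p = of_int M * (y - z)" unfolding q0'_def z_def using M by (simp add: field_simps)
  hence "rat_pabs p (q0' - \<beta> p) = rat_pabs p (of_int M) * rat_pabs p (z - y)"
    using rat_pabs_mult[OF p] rat_pabs_minus_commute[OF p, of y z] by simp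
  also have "\<dots> < \<delta>" using y(1) Mp by (simp add: field_simps)
  finally have "rat_pabs p (q0' - \<beta> p) < \<delta>" .
  moreover have "rat_pabs p (of_int M') < \<delta>"
    using rat_pabs_of_int_le_1[OF p, of M] rat_pabs_nonneg[OF p, of "of_int M"] k
      mult_left_le_one_le[of "(1 / real p) ^ k" "rat_pabs p (of_int M)"]
    by (simp add: M'_def rat_pabs_mult[OF p] rat_pabs_of_nat_prime_power[OF p p])
  moreover have "rat_pabs p' (q0' - \<beta> p') < \<delta> \<and> rat_pabs p' (of_int M') < \<delta>" if p': "p' \<in> F" for p'
  proof -
    have pp': "prime p'" "p \<noteq> p'" using p' insert by auto
    have "rat_pabs p' (q0 - \<beta> p' + of_int M * y) \<le> max (rat_pabs p' (q0 - \<beta> p')) (rat_pabs p' (of_int M))"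
      using rat_pabs_add_mult_le_max[OF pp'(1) y(2)[OF pp'(1) pp'(2)[symmetric]]] .
    moreover have "q0 - \<beta> p' + of_int M * y = q0' - \<beta> p'" unfolding q0'_def by simp
    moreover have "rat_pabs p' (of_int M') = rat_pabs p' (of_int M)"
      using pp'(2) by (simp add: M'_def rat_pabs_mult[OF pp'(1)] rat_pabs_of_nat_prime_power[OF pp'(1) p])
    ultimately show ?thesis using IH(1) p' by auto
  qed
  moreover have "rat_pabs l q0' \<le> 1" if l: "prime l" "l \<notin> insert p F" for l
    using rat_pabs_add_mult_le_max[OF l(1) y(2), of q0 "of_int M"] IH(2) l rat_pabs_of_int_le_1[OF l(1), of M]
    unfolding q0'_def by auto
  moreover have "M' > 0" unfolding M'_def using M prime_gt_0_nat[OF p] by simp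
  ultimately show ?case by (intro exI[of _ q0'] exI[of _ M']) auto
qed

lemma shifted_approximant_pabs:
  assumes F: "\<forall>p\<in>F. prime p"
    and close: "\<forall>p\<in>F. rat_pabs p (q0 - \<beta> p) < \<delta> \<and> rat_pabs p (of_int M) < \<delta>"
    and integral: "\<forall>l. prime l \<longrightarrow> l \<notin> F \<longrightarrow> rat_pabs l q0 \<le> 1"
    and L: "L > 0" "\<forall>p\<in>F. \<not> p dvd L"
  shows "\<forall>p\<in>F. rat_pabs p (q0 + of_int M * of_int t / of_nat L - \<beta> p) < \<delta>"
    and "\<forall>p. prime p \<longrightarrow> p \<notin> F \<longrightarrow> rat_pabs p (q0 + of_int M * of_int t / of_nat L) * rat_pabs p (of_nat L) \<le> 1"
proof -
  show "\<forall>p\<in>F. rat_pabs p (q0 + of_int M * of_int t / of_nat L - \<beta> p) < \<delta>"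
  proof
    fix p assume pF: "p \<in> F"
    have p: "prime p" using F pF by simp
    have "rat_pabs p (of_int t / of_nat L) \<le> 1"
      using L(2) pF rat_pabs_of_int_not_dvd[OF p, of "int L"] rat_pabs_of_int_le_1[OF p, of t]
      by (simp add: rat_pabs_divide[OF p])
    moreover have "q0 - \<beta> p + of_int M * (of_int t / of_nat L) = q0 + of_int M * of_int t / of_nat L - \<beta> p"
      by simp
    ultimately have "rat_pabs p (q0 + of_int M * of_int t / of_nat L - \<beta> p) \<le>
        max (rat_pabs p (q0 - \<beta> p)) (rat_pabs p (of_int M))"
      using rat_pabs_add_mult_le_max[OF p] by metis
    thus "rat_pabs p (q0 + of_int M * of_int t / of_nat L - \<beta> p) < \<delta>" using close pF by auto
  qed
  show "\<forall>p. prime p \<longrightarrow> p \<notin> F \<longrightarrow> rat_pabs p (q0 + of_int M * of_int t / of_nat L) * rat_pabs p (of_nat L) \<le> 1"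
  proof (intro allI impI)
    fix p :: nat assume p: "prime p" and pF: "p \<notin> F"
    have "(q0 + of_int M * of_int t / of_nat L) * of_nat L = q0 * of_nat L + of_int M * of_int t"
      using L(1) by (simp add: field_simps)
    hence "rat_pabs p (q0 + of_int M * of_int t / of_nat L) * rat_pabs p (of_nat L) =
          rat_pabs p (q0 * of_nat L + of_int M * of_int t)"
      by (simp flip: rat_pabs_mult[OF p])
    also have "\<dots> \<le> max (rat_pabs p (q0 * of_nat L)) (rat_pabs p (of_int M))"
      by (rule rat_pabs_add_mult_le_max[OF p rat_pabs_of_int_le_1[OF p]])
    also have "\<dots> \<le> 1"
      using integral p pF rat_pabs_of_int_le_1[OF p, of "int L"] rat_pabs_of_int_le_1[OF p, of M]
        rat_pabs_nonneg[OF p] by (simp add: rat_pabs_mult[OF p] mult_le_one)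
    finally show "rat_pabs p (q0 + of_int M * of_int t / of_nat L) * rat_pabs p (of_nat L) \<le> 1" .
  qed
qed

lemma exists_shifted_approximant_real:
  assumes M: "M > (0::int)" and L: "L > (0::nat)"
  obtains t :: int where "q0 + of_int M * of_int t / of_nat L \<noteq> 0"
    "\<bar>of_rat (q0 + of_int M * of_int t / of_nat L) - x\<bar> \<le> real_of_int M / real L"
proof -
  define h where "h = real_of_int M / real L"
  have h0: "h > 0" unfolding h_def using M L by simp
  define T where "T = \<lfloor>(x - of_rat q0) / h\<rfloor>"
  have "real_of_int T \<le> (x - of_rat q0) / h" "(x - of_rat q0) / h < real_of_int T + 1"
    unfolding T_def by linarith+
  hence T: "of_rat q0 + real_of_int T * h \<le> x" "x < of_rat q0 + (real_of_int T + 1) * h"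
    using h0 by (simp_all add: field_simps)
  have of_rat_shift: "of_rat (q0 + of_int M * of_int t / of_nat L) = of_rat q0 + real_of_int t * h" for t
    unfolding h_def by (simp add: of_rat_add of_rat_mult of_rat_divide)
  \<comment> \<open>of the two neighbours T and T + 1 of the real target, at most one gives the value 0\<close>
  show ?thesis
  proof (cases "q0 + of_int M * of_int T / of_nat L = 0")
    case False
    thus ?thesis using that[of T] T unfolding of_rat_shift h_def[symmetric]
      by (simp add: abs_le_iff algebra_simps)
  next
    case True
    have "q0 + of_int M * of_int (T + 1) / of_nat L = q0 + of_int M * of_int T / of_nat L + of_int M / of_nat L"
      by (simp add: add_divide_distrib[symmetric] distrib_left)
    hence "q0 + of_int M * of_int (T + 1) / of_nat L \<noteq> 0" using True M L by simp
    thus ?thesis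
      using that[of "T + 1"] T of_rat_shift[of T] True unfolding of_rat_shift h_def[symmetric]
      by (simp add: abs_le_iff algebra_simps)
  qed
qed

lemma padic_abs_eq_if_dist_less:
  assumes p: "prime p" and xy: "x \<in> Qp p" "y \<in> Qp p" and d: "padic_dist p x y < padic_abs p x"
  shows "padic_abs p y = padic_abs p x"
  using padic_abs_ultrametric[OF p xy] padic_abs_ultrametric[OF p xy(2,1)] d
    padic_dist_commute[OF p xy] by (auto simp: max_def split: if_splits)

lemma padic_dist_const_smult_le:
  assumes p: "prime p" and x: "x \<in> Qp p"
  shows "padic_dist p (padic_class p (\<lambda>n. \<gamma>)) (padic_smult p q x) \<le>
         max (rat_pabs p (\<gamma> - q * \<alpha>)) (rat_pabs p q * padic_dist p x (padic_class p (\<lambda>n. \<alpha>)))"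
proof -
  have "padic_dist p (padic_class p (\<lambda>n. q * \<alpha>)) (padic_smult p q x) =
        rat_pabs p q * padic_dist p x (padic_class p (\<lambda>n. \<alpha>))"
    using padic_dist_smult_right[OF p padic_const_in_Qp[OF p] x, of q] padic_smult_const[OF p]
      padic_dist_commute[OF p x padic_const_in_Qp[OF p]] by simp
  thus ?thesis
    using padic_dist_ultrametric[OF p padic_const_in_Qp[OF p, of \<gamma>] padic_const_in_Qp[OF p, of "q * \<alpha>"]
        padic_smult_in_Qp[OF p x, of q]] padic_dist_const[OF p] by simp
qed

text \<open>Approximate x by a rational alpha and the target y by a rational gamma; then every q close
  to gamma / alpha does the job.\<close>
lemma padic_smult_approx:
  assumes p: "prime p" and x: "x \<in> Qp p" "x \<noteq> padic_zero p" and y: "y \<in> Qp p" and r: "r > 0"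
  shows "\<exists>\<beta> \<delta>. \<delta> > 0 \<and> (\<forall>q. rat_pabs p (q - \<beta>) < \<delta> \<longrightarrow> padic_dist p y (padic_smult p q x) < r)"
proof -
  define A where "A = padic_abs p x"
  have A0: "A > 0" unfolding A_def using padic_abs_pos[OF p x] .
  obtain \<gamma> where \<gamma>: "padic_dist p y (padic_class p (\<lambda>n. \<gamma>)) < r" using padic_rat_dense[OF p y r] .
  define M where "M = rat_pabs p \<gamma> / A + 1"
  have \<gamma>A: "rat_pabs p \<gamma> / A \<ge> 0" using A0 rat_pabs_nonneg[OF p, of \<gamma>] by simp
  hence M0: "M > 0" unfolding M_def by linarith
  obtain \<alpha> where \<alpha>: "padic_dist p x (padic_class p (\<lambda>n. \<alpha>)) < min A (r / M)"
    using padic_rat_dense[OF p x(1), of "min A (r / M)"] A0 r M0 by auto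
  have a\<alpha>: "rat_pabs p \<alpha> = A"
    using padic_abs_eq_if_dist_less[OF p x(1) padic_const_in_Qp[OF p]] \<alpha> padic_abs_const[OF p]
    unfolding A_def by simp
  hence \<alpha>0: "\<alpha> \<noteq> 0" using A0 by auto
  define \<beta> where "\<beta> = \<gamma> / \<alpha>"
  have "padic_dist p y (padic_smult p q x) < r" if q: "rat_pabs p (q - \<beta>) < min 1 (r / A)" for q
  proof -
    have "\<gamma> - q * \<alpha> = \<alpha> * (\<beta> - q)" unfolding \<beta>_def using \<alpha>0 by (simp add: field_simps)
    hence "rat_pabs p (\<gamma> - q * \<alpha>) = A * rat_pabs p (q - \<beta>)"
      using rat_pabs_mult[OF p] a\<alpha> rat_pabs_minus_commute[OF p, of \<beta> q] by simp
    also have "\<dots> < A * (r / A)" using q A0 by (intro mult_strict_left_mono) auto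
    finally have close: "rat_pabs p (\<gamma> - q * \<alpha>) < r" using A0 by simp
    have "rat_pabs p q \<le> max (rat_pabs p (q - \<beta>)) (rat_pabs p \<beta>)"
      using rat_pabs_ultrametric[OF p, of "q - \<beta>" \<beta>] by simp
    moreover have "rat_pabs p \<beta> = rat_pabs p \<gamma> / A"
      unfolding \<beta>_def using rat_pabs_divide[OF p] a\<alpha> by simp
    ultimately have "rat_pabs p q \<le> M"
      using q \<gamma>A unfolding M_def by (auto simp: max_def split: if_splits)
    hence "rat_pabs p q * padic_dist p x (padic_class p (\<lambda>n. \<alpha>)) \<le> M * padic_dist p x (padic_class p (\<lambda>n. \<alpha>))"
      using padic_dist_nonneg[OF p x(1) padic_const_in_Qp[OF p]] by (rule mult_right_mono)
    also have "\<dots> < M * (r / M)" using \<alpha> M0 by (intro mult_strict_left_mono) auto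
    finally have "rat_pabs p q * padic_dist p x (padic_class p (\<lambda>n. \<alpha>)) < r" using M0 by simp
    thus ?thesis
      using padic_dist_const_smult_le[OF p x(1), of \<gamma> q \<alpha>] close \<gamma>
        padic_dist_ultrametric[OF p y padic_const_in_Qp[OF p, of \<gamma>] padic_smult_in_Qp[OF p x(1), of q]]
      by simp
  qed
  moreover have "min 1 (r / A) > 0" using r A0 by simp
  ultimately show ?thesis by blast
qed

section \<open>Orbit closures of non-invertible adeles\<close>

lemma uniform_padic_smult_approx:
  assumes a: "a \<in> adeles" and c: "c \<in> adeles" and F: "finite F"
    and nz: "\<And>p. p \<in> F \<Longrightarrow> prime p \<and> fst a p \<noteq> padic_zero p" and r: "r > 0"
  shows "\<exists>\<beta> \<delta>. \<delta> > 0 \<and> (\<forall>p\<in>F. \<forall>q. rat_pabs p (q - \<beta> p) < \<delta> \<longrightarrow>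
           padic_dist p (fst c p) (padic_smult p q (fst a p)) < r)"
proof -
  have "\<forall>p\<in>F. \<exists>\<beta>\<delta>. snd \<beta>\<delta> > 0 \<and> (\<forall>q. rat_pabs p (q - fst \<beta>\<delta>) < snd \<beta>\<delta> \<longrightarrow>
           padic_dist p (fst c p) (padic_smult p q (fst a p)) < r)"
  proof
    fix p assume "p \<in> F"
    hence p: "prime p" "fst a p \<noteq> padic_zero p" using nz by auto
    obtain \<beta> \<delta> where "\<delta> > 0"
      "\<forall>q. rat_pabs p (q - \<beta>) < \<delta> \<longrightarrow> padic_dist p (fst c p) (padic_smult p q (fst a p)) < r"
      using padic_smult_approx[OF p(1) adeles_Qp[OF a p(1)] p(2) adeles_Qp[OF c p(1)] r] by blast
    thus "\<exists>\<beta>\<delta>. snd \<beta>\<delta> > 0 \<and> (\<forall>q. rat_pabs p (q - fst \<beta>\<delta>) < snd \<beta>\<delta> \<longrightarrow>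
           padic_dist p (fst c p) (padic_smult p q (fst a p)) < r)"
      by (intro exI[of _ "(\<beta>, \<delta>)"]) simp
  qed
  from bchoice[OF this] obtain B where B: "\<forall>p\<in>F. snd (B p) > 0 \<and>
      (\<forall>q. rat_pabs p (q - fst (B p)) < snd (B p) \<longrightarrow> padic_dist p (fst c p) (padic_smult p q (fst a p)) < r)"
    by blast
  have pos: "\<And>p. p \<in> F \<Longrightarrow> snd (B p) > 0" using B by blast
  obtain \<delta> where \<delta>: "0 < \<delta>" "\<forall>p\<in>F. \<delta> \<le> snd (B p)"
    using finite_pos_lower_bound[OF F, of "\<lambda>p. snd (B p)", OF pos] by blast
  have "\<forall>p\<in>F. \<forall>q. rat_pabs p (q - fst (B p)) < \<delta> \<longrightarrow>
      padic_dist p (fst c p) (padic_smult p q (fst a p)) < r"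
  proof (intro ballI allI impI)
    fix p q assume p: "p \<in> F" and q: "rat_pabs p (q - fst (B p)) < \<delta>"
    have "\<delta> \<le> snd (B p)" using \<delta>(2) p by blast
    hence "rat_pabs p (q - fst (B p)) < snd (B p)" using q by linarith
    moreover have "\<forall>q. rat_pabs p (q - fst (B p)) < snd (B p) \<longrightarrow>
        padic_dist p (fst c p) (padic_smult p q (fst a p)) < r" using B p by blast
    ultimately show "padic_dist p (fst c p) (padic_smult p q (fst a p)) < r" by blast
  qed
  thus ?thesis using \<delta>(1) by (intro exI[of _ "\<lambda>p. fst (B p)"] exI[of _ \<delta>] conjI) blast+
qed

lemma rat_act_in_adele_box:
  assumes a: "a \<in> adeles" and c: "c \<in> adeles" and q: "q \<noteq> 0" and r: "r > 0"
    and zeros: "zero_places a \<subseteq> zero_places c"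
    and close: "\<And>p. p \<in> F \<Longrightarrow> prime p \<Longrightarrow> fst a p \<noteq> padic_zero p \<Longrightarrow>
                   padic_dist p (fst c p) (padic_smult p q (fst a p)) < r"
    and integral: "\<And>p. p \<notin> F \<Longrightarrow> prime p \<Longrightarrow> rat_pabs p q * padic_abs p (fst a p) \<le> 1"
    and real: "snd a \<noteq> 0 \<Longrightarrow> \<bar>of_rat q * snd a - snd c\<bar> < e" and e: "e > 0"
  shows "rat_act q a \<in> adele_box c F r e"
proof -
  have "fst (rat_act q a) p \<in> (if p \<in> F then padic_ball p (fst c p) r else Zp p)" if p: "prime p" for p
  proof (cases "fst a p = padic_zero p")
    case True
    hence "Some p \<in> zero_places c" using zeros p unfolding zero_places_def by blast
    hence "fst c p = padic_zero p" unfolding zero_places_def by (auto split: if_splits)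
    moreover have "fst (rat_act q a) p = padic_zero p" using True p by (simp add: rat_act_fst)
    moreover have "padic_zero p \<in> Zp p"
      using padic_zero_in_Qp[OF p] padic_abs_zero[OF p] unfolding Zp_def by simp
    ultimately show ?thesis using padic_ball_centre[OF p padic_zero_in_Qp[OF p] r] by simp
  next
    case False
    have x: "fst (rat_act q a) p \<in> Qp p"
      "padic_abs p (fst (rat_act q a) p) = rat_pabs p q * padic_abs p (fst a p)"
      using padic_abs_rat_act[OF a p] by blast+
    show ?thesis
    proof (cases "p \<in> F")
      case True
      thus ?thesis using close[OF True p False] x(1)
        unfolding padic_ball_def by (simp add: rat_act_fst[OF p])
    next
      case False
      thus ?thesis using integral[OF False p] x unfolding Zp_def by simp
    qed
  qed
  moreover have "dist (snd c) (snd (rat_act q a)) < e"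
  proof (cases "snd a = 0")
    case True
    hence "None \<in> zero_places c" using zeros unfolding zero_places_def by auto
    hence "snd c = 0" unfolding zero_places_def by (auto split: if_splits)
    thus ?thesis using True e by (simp add: rat_act_snd)
  next
    case False
    thus ?thesis using real by (simp add: rat_act_snd dist_real_def abs_minus_commute)
  qed
  ultimately show ?thesis using rat_act_in_adeles[OF a q] unfolding mem_adele_box by blast
qed

text \<open>Outside F, a_p / L is integral, so q a_p is integral as soon as q L is.\<close>
definition admissible_denominator :: "adele \<Rightarrow> nat set \<Rightarrow> nat \<Rightarrow> bool" where
  "admissible_denominator a F L \<longleftrightarrow> L > 0 \<and>
     (\<forall>p\<in>F. prime p \<longrightarrow> fst a p \<noteq> padic_zero p \<longrightarrow> \<not> p dvd L) \<and>
     (\<forall>p. prime p \<longrightarrow> p \<notin> F \<longrightarrow> padic_abs p (fst a p) \<le> rat_pabs p (of_nat L))"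

lemma admissible_denominator_1:
  assumes "a \<in> adeles" "nonintegral_primes a \<subseteq> F"
  shows "admissible_denominator a F 1"
proof -
  have "padic_abs p (fst a p) \<le> 1" if "prime p" "p \<notin> F" for p
    using that assms adeles_Qp unfolding nonintegral_primes_def Zp_def by blast
  moreover have "\<not> p dvd 1" if "prime p" for p :: nat
    using prime_gt_1_nat[OF that] by simp
  ultimately show ?thesis unfolding admissible_denominator_def by (simp add: rat_pabs_1)
qed

lemma large_admissible_denominator_if_zero:
  assumes a: "a \<in> adeles" and nonint: "nonintegral_primes a \<subseteq> F"
    and l: "prime l" "fst a l = padic_zero l"
  shows "\<exists>L. admissible_denominator a F L \<and> K < real L"
proof -
  have "real l > 1" using prime_gt_1_nat[OF l(1)] by simp
  then obtain m where m: "K < real l ^ m" using real_arch_pow by blast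
  have "\<not> p dvd l ^ m" if p: "prime p" "fst a p \<noteq> padic_zero p" for p
  proof
    assume "p dvd l ^ m"
    hence "p dvd l" by (rule prime_dvd_power[OF p(1)])
    hence "p = l" by (rule primes_dvd_imp_eq[OF p(1) l(1)])
    thus False using p(2) l(2) by simp
  qed
  moreover have "padic_abs p (fst a p) \<le> rat_pabs p (of_nat (l ^ m))" if p: "prime p" "p \<notin> F" for p
  proof (cases "p = l")
    case True
    thus ?thesis using l(2) padic_abs_zero[OF p(1)] rat_pabs_nonneg[OF p(1)] by simp
  next
    case False
    hence "rat_pabs p (of_nat (l ^ m)) = 1"
      using rat_pabs_power[OF p(1), of "of_nat l" m] rat_pabs_of_nat_prime[OF p(1) l(1)] by simp
    moreover have "fst a p \<in> Zp p"
      using p nonint adeles_Qp[OF a] unfolding nonintegral_primes_def by blast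
    ultimately show ?thesis unfolding Zp_def by simp
  qed
  moreover have "l ^ m > 0" using prime_gt_0_nat[OF l(1)] by simp
  ultimately have "admissible_denominator a F (l ^ m)" unfolding admissible_denominator_def by blast
  thus ?thesis using m by auto
qed

lemma large_admissible_denominator_if_infinite_nonunits:
  assumes a: "a \<in> adeles" and nonint: "nonintegral_primes a \<subseteq> F" and F: "finite F"
    and nonunits: "infinite {p. prime p \<and> fst a p \<notin> Zp_units p}"
    and nz: "\<And>p. prime p \<Longrightarrow> fst a p \<noteq> padic_zero p"
  shows "\<exists>L. admissible_denominator a F L \<and> K < real L"
proof -
  obtain m where m: "K < (2::real) ^ m" using real_arch_pow[of 2 K] by auto
  obtain Ls where Ls: "finite Ls" "card Ls = m" "Ls \<subseteq> {p. prime p \<and> fst a p \<notin> Zp_units p} - F"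
    using infinite_arbitrarily_large[of "{p. prime p \<and> fst a p \<notin> Zp_units p} - F" m] nonunits F
    by auto
  have Ls_prime: "\<forall>l\<in>Ls. prime l" using Ls(3) by blast
  have "(2::nat) ^ m \<le> \<Prod>Ls"
    using prod_mono[of Ls "\<lambda>_. 2::nat" id] Ls_prime prime_ge_2_nat Ls(2) by auto
  hence large: "K < real (\<Prod>Ls)"
    using m by (metis of_nat_le_iff of_nat_numeral of_nat_power order_less_le_trans)
  have "\<not> p dvd \<Prod>Ls" if p: "p \<in> F" "prime p" for p
  proof
    assume "p dvd \<Prod>Ls"
    then obtain l where "l \<in> Ls" "p dvd l" using prime_dvd_prod_iff[OF Ls(1) p(2)] by auto
    hence "l \<in> Ls" "p = l" using primes_dvd_imp_eq[OF p(2)] Ls_prime by auto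
    thus False using Ls(3) p(1) by blast
  qed
  moreover have "padic_abs p (fst a p) \<le> rat_pabs p (of_nat (\<Prod>Ls))" if p: "prime p" "p \<notin> F" for p
  proof -
    have Zp: "padic_abs p (fst a p) \<le> 1"
      using p nonint adeles_Qp[OF a] unfolding nonintegral_primes_def Zp_def by blast
    show ?thesis
    proof (cases "p \<in> Ls")
      case True
      hence "padic_abs p (fst a p) \<noteq> 1"
        using Ls(3) adeles_Qp[OF a p(1)] unfolding Zp_units_def by blast
      hence "padic_abs p (fst a p) \<le> 1 / real p"
        using Zp padic_abs_le_inverse_if_less_1[OF p(1) adeles_Qp[OF a p(1)] nz[OF p(1)]] by simp
      thus ?thesis using rat_pabs_prod_primes[OF p(1) Ls(1) Ls_prime] True by simp
    next
      case False
      thus ?thesis using rat_pabs_prod_primes[OF p(1) Ls(1) Ls_prime] Zp by simp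
    qed
  qed
  moreover have "\<Prod>Ls > (0::nat)" using Ls_prime prime_gt_0_nat by (simp add: prod_pos)
  ultimately have "admissible_denominator a F (\<Prod>Ls)" unfolding admissible_denominator_def by blast
  thus ?thesis using large by blast
qed

lemma exists_admissible_denominator:
  assumes a: "a \<in> adeles" and ninv: "\<not> adele_invertible a"
    and nonint: "nonintegral_primes a \<subseteq> F" and F: "finite F"
  shows "\<exists>L. admissible_denominator a F L \<and> (snd a \<noteq> 0 \<longrightarrow> K < real L)"
proof (cases "snd a = 0")
  case True
  thus ?thesis using admissible_denominator_1[OF a nonint] by blast
next
  case False
  show ?thesis
  proof (cases "\<exists>l. prime l \<and> fst a l = padic_zero l")
    case True
    then obtain l where "prime l" "fst a l = padic_zero l" by blast
    thus ?thesis using large_admissible_denominator_if_zero[OF a nonint] by blast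
  next
    case no_zero: False
    hence "infinite {p. prime p \<and> fst a p \<notin> Zp_units p}"
      using ninv False unfolding adele_invertible_def by blast
    thus ?thesis
      using large_admissible_denominator_if_infinite_nonunits[OF a nonint F] no_zero by blast
  qed
qed

text \<open>The multiplier is q = q0 + M t / L: q0 and M come from strong approximation at the primes
  where a is nonzero and c must be approached, L from an admissible denominator, and t from
  approximating the real coordinate.\<close>
lemma orbit_meets_adele_box:
  assumes a: "a \<in> adeles" and ninv: "\<not> adele_invertible a" and c: "c \<in> adeles"
    and zeros: "zero_places a \<subseteq> zero_places c" and box: "admissible_box c F r e"
  shows "adele_box c F r e \<inter> orbit a \<noteq> {}"
proof -
  define F1 where "F1 = F \<union> nonintegral_primes a"
  have F1: "finite F1" "nonintegral_primes a \<subseteq> F1"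
    using box finite_nonintegral_primes[OF a] unfolding F1_def admissible_box_def by auto
  have r: "r > 0" "r \<le> 1" and e: "e > 0" using box unfolding admissible_box_def by auto
  have sub: "adele_box c F1 r e \<subseteq> adele_box c F r e"
    by (rule adele_box_antimono) (use box r in \<open>auto simp: F1_def admissible_box_def\<close>)
  define F' where "F' = {p \<in> F1. prime p \<and> fst a p \<noteq> padic_zero p}"
  have F': "finite F'" "\<forall>p\<in>F'. prime p" unfolding F'_def using F1(1) by auto
  obtain \<beta> \<delta> where \<delta>: "\<delta> > 0" and targets: "\<forall>p\<in>F'. \<forall>q. rat_pabs p (q - \<beta> p) < \<delta> \<longrightarrow>
      padic_dist p (fst c p) (padic_smult p q (fst a p)) < r"
    using uniform_padic_smult_approx[OF a c F'(1) _ r(1)] unfolding F'_def by blast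
  obtain q0 M where M: "M > 0" and SA: "\<forall>p\<in>F'. rat_pabs p (q0 - \<beta> p) < \<delta> \<and> rat_pabs p (of_int M) < \<delta>"
    "\<forall>l. prime l \<longrightarrow> l \<notin> F' \<longrightarrow> rat_pabs l q0 \<le> 1"
    using rat_strong_approximation[OF F' \<delta>, of \<beta>] by blast
  obtain L where L: "admissible_denominator a F1 L"
    and large: "snd a \<noteq> 0 \<Longrightarrow> \<bar>snd a\<bar> * real_of_int M / e < real L"
    using exists_admissible_denominator[OF a ninv F1(2,1)] by blast
  have L0: "L > 0" and L_coprime: "\<forall>p\<in>F'. \<not> p dvd L"
    using L unfolding admissible_denominator_def F'_def by auto
  obtain t where q0: "q0 + of_int M * of_int t / of_nat L \<noteq> 0"
    and t: "\<bar>of_rat (q0 + of_int M * of_int t / of_nat L) - snd c / snd a\<bar> \<le> real_of_int M / real L"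
    using exists_shifted_approximant_real[OF M L0] by blast
  define q where "q = q0 + of_int M * of_int t / of_nat L"
  note shifted = shifted_approximant_pabs[OF F'(2) SA L0 L_coprime, of t, folded q_def]
  have "rat_act q a \<in> adele_box c F1 r e"
  proof (rule rat_act_in_adele_box[OF a c _ r(1) zeros _ _ _ e])
    show "q \<noteq> 0" using q0 unfolding q_def .
    show "padic_dist p (fst c p) (padic_smult p q (fst a p)) < r"
      if "p \<in> F1" "prime p" "fst a p \<noteq> padic_zero p" for p
      using that targets shifted(1) unfolding F'_def by blast
    show "rat_pabs p q * padic_abs p (fst a p) \<le> 1" if p: "p \<notin> F1" "prime p" for p
    proof -
      have "padic_abs p (fst a p) \<le> rat_pabs p (of_nat L)"
        using L p unfolding admissible_denominator_def by blast
      hence "rat_pabs p q * padic_abs p (fst a p) \<le> rat_pabs p q * rat_pabs p (of_nat L)"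
        using rat_pabs_nonneg[OF p(2)] by (rule mult_left_mono)
      also have "\<dots> \<le> 1" using shifted(2) p unfolding F'_def by blast
      finally show ?thesis .
    qed
    show "\<bar>of_rat q * snd a - snd c\<bar> < e" if sa: "snd a \<noteq> 0"
    proof -
      have "\<bar>of_rat q * snd a - snd c\<bar> = \<bar>snd a\<bar> * \<bar>of_rat q - snd c / snd a\<bar>"
        using sa by (simp add: abs_mult[symmetric] algebra_simps)
      also have "\<dots> \<le> \<bar>snd a\<bar> * (real_of_int M / real L)"
        using t unfolding q_def by (intro mult_left_mono) auto
      also have "\<dots> < e" using large[OF sa] e L0 by (simp add: field_simps)
      finally show ?thesis .
    qed
  qed
  moreover have "rat_act q a \<in> orbit a" unfolding orbit_def using q0 q_def by blast
  ultimately show ?thesis using sub by blast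
qed

lemma closure_orbit_not_invertible:
  assumes a: "a \<in> adeles" and ninv: "\<not> adele_invertible a"
  shows "adele_topology closure_of orbit a = {c \<in> adeles. zero_places a \<subseteq> zero_places c}"
proof
  show "adele_topology closure_of orbit a \<subseteq> {c \<in> adeles. zero_places a \<subseteq> zero_places c}"
    using zero_places_subset_closure in_adele_closure_iff by blast
  show "{c \<in> adeles. zero_places a \<subseteq> zero_places c} \<subseteq> adele_topology closure_of orbit a"
  proof
    fix c assume "c \<in> {c \<in> adeles. zero_places a \<subseteq> zero_places c}"
    thus "c \<in> adele_topology closure_of orbit a"
      unfolding in_adele_closure_iff using orbit_meets_adele_box[OF a ninv] by blast
  qed
qed

section \<open>The quasi-orbit space\<close>

lemma self_in_closure_orbit: "a \<in> adeles \<Longrightarrow> a \<in> adele_topology closure_of orbit a"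
  using closure_of_subset[of "orbit a" adele_topology] self_in_orbit orbit_subset_adeles
    topspace_adele_topology by blast

lemma closure_orbit_neq_if_invertible:
  assumes a: "a \<in> adeles" "adele_invertible a" and b: "b \<in> adeles" "\<not> adele_invertible b"
  shows "adele_topology closure_of orbit a \<noteq> adele_topology closure_of orbit b"
proof
  assume "adele_topology closure_of orbit a = adele_topology closure_of orbit b"
  hence "b \<in> orbit a" using self_in_closure_orbit[OF b(1)] closure_orbit_invertible[OF a] by simp
  then obtain r where "r \<noteq> 0" "b = rat_act r a" by (rule orbitE)
  thus False using adele_invertible_rat_act[OF a] b(2) by simp
qed

lemma chi_eq_iff_closure_orbit_eq:
  assumes a: "a \<in> adeles" and b: "b \<in> adeles"
  shows "chi a = chi b \<longleftrightarrow> adele_topology closure_of orbit a = adele_topology closure_of orbit b"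
proof (cases "adele_invertible a"; cases "adele_invertible b")
  assume ia: "adele_invertible a" and ib: "adele_invertible b"
  have "b \<in> orbit a \<longleftrightarrow> orbit a = orbit b"
    using orbit_rat_act[OF a] self_in_orbit[OF b] by (auto elim: orbitE)
  thus ?thesis
    using chi_eq_iff_in_orbit[OF a ia b ib] closure_orbit_invertible[OF a ia] closure_orbit_invertible[OF b ib]
    by simp
next
  assume "adele_invertible a" "\<not> adele_invertible b"
  thus ?thesis using chi_invertible chi_not_invertible closure_orbit_neq_if_invertible a b by simp
next
  assume "\<not> adele_invertible a" "adele_invertible b"
  thus ?thesis using chi_invertible chi_not_invertible closure_orbit_neq_if_invertible[OF b _ a] a b
    by fastforce
next
  assume ia: "\<not> adele_invertible a" and ib: "\<not> adele_invertible b"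
  have "{c \<in> adeles. zero_places a \<subseteq> zero_places c} = {c \<in> adeles. zero_places b \<subseteq> zero_places c} \<longleftrightarrow>
        zero_places a = zero_places b"
    using a b by blast
  thus ?thesis
    using chi_not_invertible ia ib closure_orbit_not_invertible[OF a ia] closure_orbit_not_invertible[OF b ib]
    by simp
qed

text \<open>The component p at the primes outside T makes this adele non-invertible even for T = {}.\<close>
definition adele_with_zero_places :: "nat option set \<Rightarrow> adele" where
  "adele_with_zero_places T =
     ((\<lambda>p. if prime p then (if Some p \<in> T then padic_zero p else padic_class p (\<lambda>n. of_nat p)) else {}),
      (if None \<in> T then 0 else 1))"

lemma fst_adele_with_zero_places:
  "prime p \<Longrightarrow> fst (adele_with_zero_places T) p =
     (if Some p \<in> T then padic_zero p else padic_class p (\<lambda>n. of_nat p))"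
  unfolding adele_with_zero_places_def by simp

lemma padic_abs_of_prime: "prime p \<Longrightarrow> padic_abs p (padic_class p (\<lambda>n. of_nat p)) = 1 / real p"
  using padic_abs_const rat_pabs_of_nat_self by simp

lemma padic_of_prime_nonzero: "prime p \<Longrightarrow> padic_class p (\<lambda>n. of_nat p) \<noteq> padic_zero p"
  using padic_const_eq_zero_iff prime_gt_0_nat by simp

lemma adele_with_zero_places_in_Zp: "prime p \<Longrightarrow> fst (adele_with_zero_places T) p \<in> Zp p"
  using fst_adele_with_zero_places[of p T] padic_zero_in_Qp padic_const_in_Qp
    padic_abs_of_prime prime_ge_1_nat[of p] unfolding Zp_def by auto

lemma adele_with_zero_places_in_adeles: "adele_with_zero_places T \<in> adeles"
proof -
  have "{p. prime p \<and> fst (adele_with_zero_places T) p \<notin> Zp p} = {}"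
    using adele_with_zero_places_in_Zp by blast
  moreover have "fst (adele_with_zero_places T) p \<in> Qp p" if "prime p" for p
    using adele_with_zero_places_in_Zp[OF that] unfolding Zp_def by blast
  moreover have "fst (adele_with_zero_places T) p = {}" if "\<not> prime p" for p
    using that unfolding adele_with_zero_places_def by simp
  ultimately show ?thesis unfolding adeles_def by (simp only: mem_Collect_eq finite.emptyI) blast
qed

lemma zero_places_adele_with_zero_places:
  assumes T: "T \<subseteq> Pbar"
  shows "zero_places (adele_with_zero_places T) = T"
proof (intro set_eqI iffI)
  fix z assume z: "z \<in> zero_places (adele_with_zero_places T)"
  show "z \<in> T"
  proof (cases z)
    case None
    thus ?thesis using z unfolding zero_places_def adele_with_zero_places_def
      by (auto split: if_splits)
  next
    case (Some p)
    hence "prime p" "fst (adele_with_zero_places T) p = padic_zero p"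
      using z unfolding zero_places_def by (auto split: if_splits)
    thus ?thesis using fst_adele_with_zero_places padic_of_prime_nonzero Some
      by (auto split: if_splits)
  qed
next
  fix z assume z: "z \<in> T"
  show "z \<in> zero_places (adele_with_zero_places T)"
  proof (cases z)
    case None
    thus ?thesis using z unfolding zero_places_def adele_with_zero_places_def by simp
  next
    case (Some p)
    hence p: "prime p" using z T unfolding Pbar_def by auto
    hence "fst (adele_with_zero_places T) p = padic_zero p"
      using fst_adele_with_zero_places z Some by simp
    thus ?thesis unfolding zero_places_def using p Some by blast
  qed
qed

lemma adele_with_zero_places_not_invertible:
  assumes T: "T \<subseteq> Pbar"
  shows "\<not> adele_invertible (adele_with_zero_places T)"
proof
  let ?a = "adele_with_zero_places T"
  assume inv: "adele_invertible ?a"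
  hence "T = {}"
    using zero_places_adele_with_zero_places[OF T]
    unfolding zero_places_def adele_invertible_def by (auto split: if_splits)
  hence "fst ?a p \<notin> Zp_units p" if "prime p" for p
    using that fst_adele_with_zero_places padic_abs_of_prime prime_gt_1_nat[OF that]
    unfolding Zp_units_def by simp
  hence "{p. prime p \<and> fst ?a p \<notin> Zp_units p} = {p. prime p}" by blast
  thus False using inv primes_infinite unfolding adele_invertible_def by simp
qed

lemma chi_image: "chi ` adeles = chi_codomain"
proof
  show "chi ` adeles \<subseteq> chi_codomain"
  proof
    fix y assume "y \<in> chi ` adeles"
    then obtain a where a: "a \<in> adeles" "y = chi a" by blast
    show "y \<in> chi_codomain"
    proof (cases "adele_invertible a")
      case True
      thus ?thesis
        using a chi_invertible rat_act_chi_scalar_in_units_U[OF a(1) True] unfolding chi_codomain_def by simp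
    next
      case False
      have "zero_places a \<subseteq> Pbar" unfolding zero_places_def Pbar_def by auto
      thus ?thesis using a chi_not_invertible[OF False] unfolding chi_codomain_def by simp
    qed
  qed
  show "chi_codomain \<subseteq> chi ` adeles"
  proof
    fix y assume "y \<in> chi_codomain"
    then consider (zeros) T where "T \<subseteq> Pbar" "y = Inl T" | (unit) u where "u \<in> units_U" "y = Inr u"
      unfolding chi_codomain_def by blast
    thus "y \<in> chi ` adeles"
    proof cases
      case zeros
      hence "y = chi (adele_with_zero_places T)"
        using chi_not_invertible adele_with_zero_places_not_invertible zero_places_adele_with_zero_places
        by simp
      thus ?thesis using adele_with_zero_places_in_adeles by blast
    next
      case unit
      hence "y = chi u" using chi_units_U by simp
      thus ?thesis using units_U_adeles[OF unit(1)] by blast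
    qed
  qed
qed

lemma bij_betw_quotient_image:
  assumes R: "\<And>a b. (a, b) \<in> R \<longleftrightarrow> a \<in> A \<and> b \<in> A \<and> g a = g b"
  shows "bij_betw (\<lambda>X. the_elem (g ` X)) (A // R) (g ` A)"
    and "\<And>a. a \<in> A \<Longrightarrow> the_elem (g ` (R `` {a})) = g a"
proof -
  have equiv_class: "R `` {a} = {b \<in> A. g b = g a}" if "a \<in> A" for a
    using that R by auto
  show the_elem_class: "the_elem (g ` (R `` {a})) = g a" if "a \<in> A" for a
  proof -
    have "g ` (R `` {a}) = {g a}" using equiv_class[OF that] that by auto
    thus ?thesis by simp
  qed
  show "bij_betw (\<lambda>X. the_elem (g ` X)) (A // R) (g ` A)"
  proof (rule bij_betw_imageI)
    show "inj_on (\<lambda>X. the_elem (g ` X)) (A // R)"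
    proof (rule inj_onI)
      fix X Y assume "X \<in> A // R" "Y \<in> A // R" and eq: "the_elem (g ` X) = the_elem (g ` Y)"
      then obtain a b where ab: "a \<in> A" "X = R `` {a}" "b \<in> A" "Y = R `` {b}"
        by (auto elim!: quotientE)
      hence "g a = g b" using eq the_elem_class by simp
      thus "X = Y" using ab equiv_class by simp
    qed
    have "A // R = (\<lambda>a. R `` {a}) ` A" unfolding quotient_def by blast
    thus "(\<lambda>X. the_elem (g ` X)) ` (A // R) = g ` A"
      using the_elem_class by (simp add: image_image cong: image_cong)
  qed
qed

theorem proposition3p4:
  shows "chi ` adeles = chi_codomain \<and>
         (\<forall>a\<in>adeles. \<forall>b\<in>adeles. chi a = chi b \<longleftrightarrow>
            adele_topology closure_of orbit a = adele_topology closure_of orbit b) \<and>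
         (\<exists>f. bij_betw f (adeles // quasi_orbit_rel) chi_codomain \<and>
            (\<forall>a\<in>adeles. f (quasi_orbit_rel `` {a}) = chi a))"
proof -
  have rel: "(a, b) \<in> quasi_orbit_rel \<longleftrightarrow> a \<in> adeles \<and> b \<in> adeles \<and> chi a = chi b" for a b
    using chi_eq_iff_closure_orbit_eq[of a b] unfolding quasi_orbit_rel_def by auto
  define f where "f = (\<lambda>X. the_elem (chi ` X))"
  have "bij_betw f (adeles // quasi_orbit_rel) chi_codomain"
    using bij_betw_quotient_image(1)[OF rel] chi_image unfolding f_def by simp
  moreover have "\<forall>a\<in>adeles. f (quasi_orbit_rel `` {a}) = chi a"
    using bij_betw_quotient_image(2)[OF rel] unfolding f_def by blast
  ultimately show ?thesis using chi_image chi_eq_iff_closure_orbit_eq by blast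
qed

end
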